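(* Let $\mathcal{C}$ be an essentially small symmetric monoidal category with images, which is concrete with concrete images. Suppose $F\in\mathsf{Pmod}(\mathcal{C})$ is $S=\{s_1<\cdots<s_n\}$-constructible and let $\rho=\frac14\min_{1<i\le n}(s_i-s_{i-1})$. Then for any $G\in\mathsf{Pmod}(\mathcal{C})$ with $\varepsilon=d_I(F,G)<\rho$, there is a morphism $\nabla^\varepsilon(F_A)\to G_A$ in $\mathsf{PDgm}(A(\mathcal{C}))$.
   Context: $(\mathcal{C},\Box)$ is an essentially small symmetric monoidal category with unit object $e$. "With images": every morphism $f:a\to b$ factors as $f=h\circ g$ with $h:z\to b$ a monomorphism, universally among such factorizations; $\operatorname{im} f$ denotes $z$. "Concrete with concrete images": $\mathcal{C}$ embeds into $\mathsf{Set}$ and the image of a morphism corresponds to the set-theoretic image. A persistence module is a functor $F:(\mathbb{R},\le)\to\mathcal{C}$. For finite $S=\{s_1<\dots<s_n\}$, $F$ is $S$-constructible if $F(p\le q)$ is the identity on $e$ for $p\le q<s_1$, an isomorphism for $s_i\le p\le q<s_{i+1}$, and an isomorphism for $s_n\le p\le q$. $\mathsf{Pmod}(\mathcal{C})$ is the category of constructible persistence modules (constructible w.r.t. some finite $S$) and natural transformations. Interleaving distance: for $\varepsilon\in\mathbb{R}$, $\Delta^\varepsilon(F)=F\circ\mathsf{Shift}^\varepsilon$ where $\mathsf{Shift}^\varepsilon(r)=r+\varepsilon$; for $\varepsilon\ge0$, $\sigma^\varepsilon_F:F\to\Delta^\varepsilon F$ has components $F(r\le r+\varepsilon)$. $F,G$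 are $\varepsilon$-interleaved if there are morphisms $\phi:F\to\Delta^\varepsilon G$, $\psi:G\to\Delta^\varepsilon F$ with $\Delta^\varepsilon(\psi)\circ\phi=\sigma^{2\varepsilon}_F$ and $\Delta^\varepsilon(\phi)\circ\psi=\sigma^{2\varepsilon}_G$. $d_I(F,G)$ is the minimum $\varepsilon\ge0$ for which they are $\varepsilon$-interleaved ($\infty$ if none). $\mathsf{Dgm}$ is the poset of intervals $[q,r)$, $q<r$, and $[q,\infty)$, ordered by containment. $I(\mathcal{C})$ is the commutative monoid of isomorphism classes under $[a]+[b]=[a\Box b]$, $A(\mathcal{C})$ its group completion, with partial order $x\preceq y$ iff $y-x\in I(\mathcal{C})$ (translation invariant). A persistence diagram valued in $A(\mathcal{C})$ is a map $Y:\mathsf{Dgm}\to A(\mathcal{C})$ that is nonzero only on intervals $[t_i,t_j)$, $[t_i,\infty)$ for some finite set $\{t_1<\dots<t_m\}$. $\mathsf{PDgm}(A(\mathcal{C}))$ is the poset of such diagrams where there is a morphism $Y_1\to Y_2$ iff $\sum_{J\supseteq I}Y_1(J)\preceq\sum_{J\supseteq I}Y_2(J)$ for every $I\in\mathsf{Dgm}$ with $Y_1(I)\neq 0$. For $\varepsilon\ge0$, $\mathsf{Grow}^\varepsilon$ sends $[p,q)\mapsto[p-\varepsilon,q+\varepsilon)$, $[p,\infty)\mapsto[p-\varepsilon,\infty)$, and $\nabla^\varepsilon(Y)=Y\circ\mathsf{Grow}^\varepsilon$. Type $A$ diagram: for $F$ $S$-constructible, define $dF_A:\mathsf{Dgm}\to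 A(\mathcal{C})$ by $dF_A([p,s_i))=[\operatorname{im}F(p\le s_i-\delta)]$ for any $\delta>0$ with $\max(p,s_{i-1})\le s_i-\delta$ ($s_0=-\infty$); $dF_A([p,\infty))=[\operatorname{im}F(p\le s')]$ for any $s'>\max(p,s_n)$; $dF_A([p,q))=[\operatorname{im}F(p\le q)]$ for all other intervals (independent of choices). $F_A$ is its Möbius inversion: $F_A([s_i,s_j))=dF_A([s_i,s_j))-dF_A([s_i,s_{j+1}))+dF_A([s_{i-1},s_{j+1}))-dF_A([s_{i-1},s_j))$, $F_A([s_i,\infty))=dF_A([s_i,\infty))-dF_A([s_{i-1},\infty))$ ($s_0$ any value $<s_1$, $s_{n+1}$ any value $>s_n$), and $F_A(I)=0$ otherwise; it satisfies $dF_A(I)=\sum_{J\supseteq I}F_A(J)$. *)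

theory Defs
  imports Complex_Main "HOL-Library.Extended_Real" "HOL-Algebra.FiniteProduct"
begin

text \<open>A (small) category whose objects are all elements of type 'o and whose morphisms
  are all elements of type 'm.  ccomp g f is g after f, meaningful when ccod f = cdom g.\<close>

record ('o, 'm) smcat =
  cdom :: "'m \<Rightarrow> 'o"
  ccod :: "'m \<Rightarrow> 'o"
  ccomp :: "'m \<Rightarrow> 'm \<Rightarrow> 'm"
  cid :: "'o \<Rightarrow> 'm"
  ctens :: "'o \<Rightarrow> 'o \<Rightarrow> 'o"
  ctensm :: "'m \<Rightarrow> 'm \<Rightarrow> 'm"
  cunit :: "'o"
  cassoc :: "'o \<Rightarrow> 'o \<Rightarrow> 'o \<Rightarrow> 'm"
  clunit :: "'o \<Rightarrow> 'm"
  crunit :: "'o \<Rightarrow> 'm"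
  cbraid :: "'o \<Rightarrow> 'o \<Rightarrow> 'm"

definition is_category :: "('o,'m) smcat \<Rightarrow> bool" where
  "is_category C \<longleftrightarrow>
     (\<forall>a. cdom C (cid C a) = a \<and> ccod C (cid C a) = a) \<and>
     (\<forall>f g. ccod C f = cdom C g \<longrightarrow>
        cdom C (ccomp C g f) = cdom C f \<and> ccod C (ccomp C g f) = ccod C g) \<and>
     (\<forall>f. ccomp C f (cid C (cdom C f)) = f \<and> ccomp C (cid C (ccod C f)) f = f) \<and>
     (\<forall>f g h. ccod C f = cdom C g \<longrightarrow> ccod C g = cdom C h \<longrightarrow>
        ccomp C h (ccomp C g f) = ccomp C (ccomp C h g) f)"

definition is_iso :: "('o,'m) smcat \<Rightarrow> 'm \<Rightarrow> bool" where
  "is_iso C f \<longleftrightarrow> (\<exists>g. cdom C g = ccod C f \<and> ccod C g = cdom C f \<and>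
      ccomp C g f = cid C (cdom C f) \<and> ccomp C f g = cid C (ccod C f))"

definition is_mono :: "('o,'m) smcat \<Rightarrow> 'm \<Rightarrow> bool" where
  "is_mono C f \<longleftrightarrow> (\<forall>g h. ccod C g = cdom C f \<longrightarrow> ccod C h = cdom C f \<longrightarrow>
      cdom C g = cdom C h \<longrightarrow> ccomp C f g = ccomp C f h \<longrightarrow> g = h)"

definition iso_obj :: "('o,'m) smcat \<Rightarrow> 'o \<Rightarrow> 'o \<Rightarrow> bool" where
  "iso_obj C a b \<longleftrightarrow> (\<exists>f. cdom C f = a \<and> ccod C f = b \<and> is_iso C f)"

definition is_smc :: "('o,'m) smcat \<Rightarrow> bool" where
  "is_smc C \<longleftrightarrow> is_category C \<and>
     \<comment> \<open>tensor product is a bifunctor\<close>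
     (\<forall>f g. cdom C (ctensm C f g) = ctens C (cdom C f) (cdom C g) \<and>
            ccod C (ctensm C f g) = ctens C (ccod C f) (ccod C g)) \<and>
     (\<forall>a b. ctensm C (cid C a) (cid C b) = cid C (ctens C a b)) \<and>
     (\<forall>f g f' g'. ccod C f = cdom C g \<longrightarrow> ccod C f' = cdom C g' \<longrightarrow>
        ctensm C (ccomp C g f) (ccomp C g' f') = ccomp C (ctensm C g g') (ctensm C f f')) \<and>
     \<comment> \<open>associator, unitors, braiding: natural isomorphisms\<close>
     (\<forall>a b c. cdom C (cassoc C a b c) = ctens C (ctens C a b) c \<and>
              ccod C (cassoc C a b c) = ctens C a (ctens C b c) \<and> is_iso C (cassoc C a b c)) \<and>
     (\<forall>a. cdom C (clunit C a) = ctens C (cunit C) a \<and> ccod C (clunit C a) = a \<and>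
          is_iso C (clunit C a)) \<and>
     (\<forall>a. cdom C (crunit C a) = ctens C a (cunit C) \<and> ccod C (crunit C a) = a \<and>
          is_iso C (crunit C a)) \<and>
     (\<forall>a b. cdom C (cbraid C a b) = ctens C a b \<and> ccod C (cbraid C a b) = ctens C b a \<and>
          is_iso C (cbraid C a b)) \<and>
     (\<forall>f g h. ccomp C (cassoc C (ccod C f) (ccod C g) (ccod C h)) (ctensm C (ctensm C f g) h) =
              ccomp C (ctensm C f (ctensm C g h)) (cassoc C (cdom C f) (cdom C g) (cdom C h))) \<and>
     (\<forall>f. ccomp C (clunit C (ccod C f)) (ctensm C (cid C (cunit C)) f) =
          ccomp C f (clunit C (cdom C f))) \<and>
     (\<forall>f. ccomp C (crunit C (ccod C f)) (ctensm C f (cid C (cunit C))) =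
          ccomp C f (crunit C (cdom C f))) \<and>
     (\<forall>f g. ccomp C (cbraid C (ccod C f) (ccod C g)) (ctensm C f g) =
            ccomp C (ctensm C g f) (cbraid C (cdom C f) (cdom C g))) \<and>
     \<comment> \<open>pentagon\<close>
     (\<forall>a b c d. ccomp C (cassoc C a b (ctens C c d)) (cassoc C (ctens C a b) c d) =
        ccomp C (ctensm C (cid C a) (cassoc C b c d))
          (ccomp C (cassoc C a (ctens C b c) d) (ctensm C (cassoc C a b c) (cid C d)))) \<and>
     \<comment> \<open>triangle\<close>
     (\<forall>a b. ccomp C (ctensm C (cid C a) (clunit C b)) (cassoc C a (cunit C) b) =
            ctensm C (crunit C a) (cid C b)) \<and>
     \<comment> \<open>hexagon\<close>
     (\<forall>a b c. ccomp C (cassoc C b c a) (ccomp C (cbraid C a (ctens C b c)) (cassoc C a b c)) =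
        ccomp C (ctensm C (cid C b) (cbraid C a c))
          (ccomp C (cassoc C b a c) (ctensm C (cbraid C a b) (cid C c)))) \<and>
     \<comment> \<open>symmetry\<close>
     (\<forall>a b. ccomp C (cbraid C b a) (cbraid C a b) = cid C (ctens C a b))"

definition is_image :: "('o,'m) smcat \<Rightarrow> 'm \<Rightarrow> 'm \<Rightarrow> bool" where
  "is_image C f h \<longleftrightarrow> is_mono C h \<and> ccod C h = ccod C f \<and>
     (\<exists>g. cdom C g = cdom C f \<and> ccod C g = cdom C h \<and> ccomp C h g = f) \<and>
     (\<forall>h' g'. is_mono C h' \<and> ccod C h' = ccod C f \<and> cdom C g' = cdom C f \<and>
        ccod C g' = cdom C h' \<and> ccomp C h' g' = f \<longrightarrow>
        (\<exists>k. cdom C k = cdom C h \<and> ccod C k = cdom C h' \<and> ccomp C h' k = h))"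

definition has_images :: "('o,'m) smcat \<Rightarrow> bool" where
  "has_images C \<longleftrightarrow> (\<forall>f. \<exists>h. is_image C f h)"

definition im_obj :: "('o,'m) smcat \<Rightarrow> 'm \<Rightarrow> 'o" where
  "im_obj C f = cdom C (SOME h. is_image C f h)"

text \<open>Concrete with concrete images: a faithful functor (Uo, Um) into Set under which
  images are set-theoretic images.\<close>

definition concrete_images :: "('o,'m) smcat \<Rightarrow> ('o \<Rightarrow> 'x set) \<Rightarrow> ('m \<Rightarrow> 'x \<Rightarrow> 'x) \<Rightarrow> bool" where
  "concrete_images C Uo Um \<longleftrightarrow>
     (\<forall>f. Um f ` Uo (cdom C f) \<subseteq> Uo (ccod C f)) \<and>
     (\<forall>a. \<forall>x\<in>Uo a. Um (cid C a) x = x) \<and>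
     (\<forall>f g. ccod C f = cdom C g \<longrightarrow> (\<forall>x\<in>Uo (cdom C f). Um (ccomp C g f) x = Um g (Um f x))) \<and>
     (\<forall>f g. cdom C f = cdom C g \<longrightarrow> ccod C f = ccod C g \<longrightarrow>
        (\<forall>x\<in>Uo (cdom C f). Um f x = Um g x) \<longrightarrow> f = g) \<and>
     (\<forall>f h. is_image C f h \<longrightarrow> Um h ` Uo (cdom C h) = Um f ` Uo (cdom C f))"

text \<open>A persistence module is given by its transition morphisms F p q (for p \<le> q).\<close>

definition pobj :: "('o,'m) smcat \<Rightarrow> (real \<Rightarrow> real \<Rightarrow> 'm) \<Rightarrow> real \<Rightarrow> 'o" where
  "pobj C F p = cdom C (F p p)"

definition is_pmod :: "('o,'m) smcat \<Rightarrow> (real \<Rightarrow> real \<Rightarrow> 'm) \<Rightarrow> bool" where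
  "is_pmod C F \<longleftrightarrow>
     (\<forall>p. F p p = cid C (pobj C F p)) \<and>
     (\<forall>p q. p \<le> q \<longrightarrow> cdom C (F p q) = pobj C F p \<and> ccod C (F p q) = pobj C F q) \<and>
     (\<forall>p q r. p \<le> q \<longrightarrow> q \<le> r \<longrightarrow> ccomp C (F q r) (F p q) = F p r)"

definition constructible :: "('o,'m) smcat \<Rightarrow> real set \<Rightarrow> (real \<Rightarrow> real \<Rightarrow> 'm) \<Rightarrow> bool" where
  "constructible C S F \<longleftrightarrow> finite S \<and> S \<noteq> {} \<and> is_pmod C F \<and>
     (\<forall>p q. p \<le> q \<longrightarrow> q < Min S \<longrightarrow> F p q = cid C (cunit C)) \<and>
     (\<forall>p q. Min S \<le> p \<longrightarrow> p \<le> q \<longrightarrow> (\<forall>s\<in>S. \<not> (p < s \<and> s \<le> q)) \<longrightarrow> is_iso C (F p q))"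

definition in_Pmod :: "('o,'m) smcat \<Rightarrow> (real \<Rightarrow> real \<Rightarrow> 'm) \<Rightarrow> bool" where
  "in_Pmod C F \<longleftrightarrow> (\<exists>S. constructible C S F)"

definition nat_trans :: "('o,'m) smcat \<Rightarrow> (real \<Rightarrow> real \<Rightarrow> 'm) \<Rightarrow> (real \<Rightarrow> real \<Rightarrow> 'm) \<Rightarrow> (real \<Rightarrow> 'm) \<Rightarrow> bool" where
  "nat_trans C F G \<phi> \<longleftrightarrow>
     (\<forall>r. cdom C (\<phi> r) = pobj C F r \<and> ccod C (\<phi> r) = pobj C G r) \<and>
     (\<forall>p q. p \<le> q \<longrightarrow> ccomp C (G p q) (\<phi> p) = ccomp C (\<phi> q) (F p q))"

definition shiftP :: "real \<Rightarrow> (real \<Rightarrow> real \<Rightarrow> 'm) \<Rightarrow> (real \<Rightarrow> real \<Rightarrow> 'm)" where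
  "shiftP \<epsilon> F = (\<lambda>p q. F (p + \<epsilon>) (q + \<epsilon>))"

definition interleaved :: "('o,'m) smcat \<Rightarrow> real \<Rightarrow> (real \<Rightarrow> real \<Rightarrow> 'm) \<Rightarrow> (real \<Rightarrow> real \<Rightarrow> 'm) \<Rightarrow> bool" where
  "interleaved C \<epsilon> F G \<longleftrightarrow> (\<exists>\<phi> \<psi>.
     nat_trans C F (shiftP \<epsilon> G) \<phi> \<and> nat_trans C G (shiftP \<epsilon> F) \<psi> \<and>
     (\<forall>r. ccomp C (\<psi> (r + \<epsilon>)) (\<phi> r) = F r (r + 2 * \<epsilon>)) \<and>
     (\<forall>r. ccomp C (\<phi> (r + \<epsilon>)) (\<psi> r) = G r (r + 2 * \<epsilon>)))"

definition dI :: "('o,'m) smcat \<Rightarrow> (real \<Rightarrow> real \<Rightarrow> 'm) \<Rightarrow> (real \<Rightarrow> real \<Rightarrow> 'm) \<Rightarrow> ereal" where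
  "dI C F G = Inf {ereal \<epsilon> | \<epsilon>. \<epsilon> \<ge> 0 \<and> interleaved C \<epsilon> F G}"

section \<open>The group completion A(C) of the monoid of isomorphism classes\<close>

text \<open>Elements are classes of formal differences (a, b) meaning [a] - [b].\<close>

definition Gcls :: "('o,'m) smcat \<Rightarrow> 'o \<times> 'o \<Rightarrow> ('o \<times> 'o) set" where
  "Gcls C ab = {(c, d). \<exists>k. iso_obj C (ctens C (ctens C (fst ab) d) k) (ctens C (ctens C c (snd ab)) k)}"

definition Grep :: "('o \<times> 'o) set \<Rightarrow> 'o \<times> 'o" where
  "Grep X = (SOME p. p \<in> X)"

definition AC :: "('o,'m) smcat \<Rightarrow> ('o \<times> 'o) set monoid" where
  "AC C = \<lparr> carrier = range (Gcls C),
            mult = (\<lambda>X Y. Gcls C (ctens C (fst (Grep X)) (fst (Grep Y)),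
                                   ctens C (snd (Grep X)) (snd (Grep Y)))),
            one = Gcls C (cunit C, cunit C) \<rparr>"

definition cls :: "('o,'m) smcat \<Rightarrow> 'o \<Rightarrow> ('o \<times> 'o) set" where
  "cls C a = Gcls C (a, cunit C)"

definition Ale :: "('o,'m) smcat \<Rightarrow> ('o \<times> 'o) set \<Rightarrow> ('o \<times> 'o) set \<Rightarrow> bool" where
  "Ale C x y \<longleftrightarrow> (\<exists>a. y \<otimes>\<^bsub>AC C\<^esub> inv\<^bsub>AC C\<^esub> x = cls C a)"

datatype intv = IFin real real | IInf real

fun valid_intv :: "intv \<Rightarrow> bool" where
  "valid_intv (IFin q r) = (q < r)"
| "valid_intv (IInf q) = True"

text \<open>contains J I: J \<supseteq> I\<close>
fun contains :: "intv \<Rightarrow> intv \<Rightarrow> bool" where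
  "contains (IFin q r) (IFin q' r') = (q \<le> q' \<and> r' \<le> r)"
| "contains (IFin q r) (IInf q') = False"
| "contains (IInf q) (IFin q' r') = (q \<le> q')"
| "contains (IInf q) (IInf q') = (q \<le> q')"

definition is_pdgm :: "('o,'m) smcat \<Rightarrow> (intv \<Rightarrow> ('o \<times> 'o) set) \<Rightarrow> bool" where
  "is_pdgm C Y \<longleftrightarrow> (\<forall>I. valid_intv I \<longrightarrow> Y I \<in> carrier (AC C)) \<and>
     (\<exists>T. finite T \<and> (\<forall>I. valid_intv I \<longrightarrow> Y I \<noteq> \<one>\<^bsub>AC C\<^esub> \<longrightarrow>
        (case I of IFin q r \<Rightarrow> q \<in> T \<and> r \<in> T | IInf q \<Rightarrow> q \<in> T)))"

definition up_sum :: "('o,'m) smcat \<Rightarrow> (intv \<Rightarrow> ('o \<times> 'o) set) \<Rightarrow> intv \<Rightarrow> ('o \<times> 'o) set" where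
  "up_sum C Y I = finprod (AC C) Y {J. valid_intv J \<and> contains J I \<and> Y J \<noteq> \<one>\<^bsub>AC C\<^esub>}"

definition pdgm_hom :: "('o,'m) smcat \<Rightarrow> (intv \<Rightarrow> ('o \<times> 'o) set) \<Rightarrow> (intv \<Rightarrow> ('o \<times> 'o) set) \<Rightarrow> bool" where
  "pdgm_hom C Y1 Y2 \<longleftrightarrow> (\<forall>I. valid_intv I \<longrightarrow> Y1 I \<noteq> \<one>\<^bsub>AC C\<^esub> \<longrightarrow>
      Ale C (up_sum C Y1 I) (up_sum C Y2 I))"

fun grow :: "real \<Rightarrow> intv \<Rightarrow> intv" where
  "grow \<epsilon> (IFin p q) = IFin (p - \<epsilon>) (q + \<epsilon>)"
| "grow \<epsilon> (IInf p) = IInf (p - \<epsilon>)"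

definition nabla :: "real \<Rightarrow> (intv \<Rightarrow> 'a) \<Rightarrow> (intv \<Rightarrow> 'a)" where
  "nabla \<epsilon> Y = Y \<circ> grow \<epsilon>"

text \<open>For [p, s_i) we use the point max(p, s_(i-1)) (i.e. delta = s_i - max(p, s_(i-1)));
  for [p, \<infinity>) the point max(p, s_n) + 1.\<close>
fun dFA :: "('o,'m) smcat \<Rightarrow> real set \<Rightarrow> (real \<Rightarrow> real \<Rightarrow> 'm) \<Rightarrow> intv \<Rightarrow> ('o \<times> 'o) set" where
  "dFA C S F (IFin p q) =
     (if q \<in> S then cls C (im_obj C (F p (Max (insert p {s\<in>S. s < q}))))
      else cls C (im_obj C (F p q)))"
| "dFA C S F (IInf p) = cls C (im_obj C (F p (Max (insert p S) + 1)))"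

definition nxt :: "real set \<Rightarrow> real \<Rightarrow> real" where
  "nxt S b = (if \<exists>s\<in>S. b < s then Min {s\<in>S. b < s} else b + 1)"

definition prv :: "real set \<Rightarrow> real \<Rightarrow> real" where
  "prv S a = (if \<exists>s\<in>S. s < a then Max {s\<in>S. s < a} else a - 1)"

fun FA :: "('o,'m) smcat \<Rightarrow> real set \<Rightarrow> (real \<Rightarrow> real \<Rightarrow> 'm) \<Rightarrow> intv \<Rightarrow> ('o \<times> 'o) set" where
  "FA C S F (IFin a b) =
     (if a \<in> S \<and> b \<in> S \<and> a < b then
        dFA C S F (IFin a b) \<otimes>\<^bsub>AC C\<^esub> inv\<^bsub>AC C\<^esub> dFA C S F (IFin a (nxt S b))
          \<otimes>\<^bsub>AC C\<^esub> dFA C S F (IFin (prv S a) (nxt S b))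
          \<otimes>\<^bsub>AC C\<^esub> inv\<^bsub>AC C\<^esub> dFA C S F (IFin (prv S a) b)
      else \<one>\<^bsub>AC C\<^esub>)"
| "FA C S F (IInf a) =
     (if a \<in> S then dFA C S F (IInf a) \<otimes>\<^bsub>AC C\<^esub> inv\<^bsub>AC C\<^esub> dFA C S F (IInf (prv S a))
      else \<one>\<^bsub>AC C\<^esub>)"

end

theory Submission
  imports Defs "HOL-Library.Multiset"
begin

text \<open>For an interval \<open>I\<close> carrying mass in \<open>\<nabla>\<^sup>\<epsilon>(F\<^sub>A)\<close>, the grown interval is \<open>[a, b)\<close>
  or \<open>[a, \<infinity>)\<close> with end points in \<open>S\<close>. Summing \<open>F\<^sub>A\<close> over all intervals containing it
  telescopes along \<open>S\<close> to \<open>dF\<^sub>A[a, b) - dF\<^sub>A[Min S - 1, b)\<close>, and the same holds for \<open>G\<^sub>A\<close> at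
  \<open>[a + \<epsilon>, b - \<epsilon>)\<close>. Every value of a type A diagram is the class of the image of a
  transition \<open>F(x \<le> u)\<close>, where no critical value separates \<open>u\<close> from the right end point. Because the gaps of \<open>S\<close> exceed \<open>4\<epsilon>\<close>,
  an \<open>e\<close>-interleaving with \<open>e\<close> slightly above \<open>\<epsilon>\<close> sandwiches \<open>F(p + 2e \<le> q - 2e)\<close> and
  \<open>G(p + e \<le> q - e)\<close> between isomorphisms of \<open>F\<close>, so the two images are isomorphic, and the
  constructibility of \<open>G\<close> absorbs the difference between \<open>e\<close> and \<open>\<epsilon>\<close>. Hence the two sums
  over containing intervals coincide, which is more than the required inequality.\<close>

section \<open>Categories with images\<close>

locale smc_images =
  fixes C :: "('o,'m) smcat"
  assumes smc: "is_smc C" and has_images: "has_images C"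
begin

abbreviation comp_syntax (infixr "\<cdot>" 55) where "g \<cdot> f \<equiv> ccomp C g f"

lemma category: "is_category C"
  using smc unfolding is_smc_def by simp

lemma cid_dom [simp]: "cdom C (cid C a) = a" and cid_cod [simp]: "ccod C (cid C a) = a"
  using category unfolding is_category_def by auto

lemma comp_dom [simp]: "ccod C f = cdom C g \<Longrightarrow> cdom C (g \<cdot> f) = cdom C f"
  and comp_cod [simp]: "ccod C f = cdom C g \<Longrightarrow> ccod C (g \<cdot> f) = ccod C g"
  using category unfolding is_category_def by auto

lemma comp_cid_right [simp]: "cdom C f = a \<Longrightarrow> f \<cdot> cid C a = f"
  and comp_cid_left [simp]: "ccod C f = a \<Longrightarrow> cid C a \<cdot> f = f"
  using category unfolding is_category_def by auto

lemma comp_assoc: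
  "ccod C f = cdom C g \<Longrightarrow> ccod C g = cdom C h \<Longrightarrow> (h \<cdot> g) \<cdot> f = h \<cdot> g \<cdot> f"
  using category unfolding is_category_def by auto

lemma comp_cancel:
  assumes "ccod C f = cdom C g" "ccod C g = cdom C h" "h \<cdot> g = cid C (cdom C g)"
  shows "h \<cdot> g \<cdot> f = f"
  using assms by (simp flip: comp_assoc)

lemma is_iso_cid [simp]: "is_iso C (cid C a)"
  unfolding is_iso_def by (rule exI[of _ "cid C a"]) simp

lemma is_isoE:
  assumes "is_iso C f"
  obtains g where "cdom C g = ccod C f" "ccod C g = cdom C f"
    "g \<cdot> f = cid C (cdom C f)" "f \<cdot> g = cid C (ccod C f)" "is_iso C g"
proof -
  obtain g where g: "cdom C g = ccod C f" "ccod C g = cdom C f"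
    "g \<cdot> f = cid C (cdom C f)" "f \<cdot> g = cid C (ccod C f)"
    using assms unfolding is_iso_def by blast
  moreover have "is_iso C g"
    unfolding is_iso_def using g by (intro exI[of _ f]) auto
  ultimately show ?thesis using that by blast
qed

lemma is_iso_comp:
  assumes "is_iso C f" "is_iso C g" "ccod C f = cdom C g"
  shows "is_iso C (g \<cdot> f)"
proof -
  obtain f' where f': "cdom C f' = ccod C f" "ccod C f' = cdom C f"
    "f' \<cdot> f = cid C (cdom C f)" "f \<cdot> f' = cid C (ccod C f)"
    using assms(1) by (rule is_isoE)
  obtain g' where g': "cdom C g' = ccod C g" "ccod C g' = cdom C g"
    "g' \<cdot> g = cid C (cdom C g)" "g \<cdot> g' = cid C (ccod C g)"
    using assms(2) by (rule is_isoE)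
  have "(f' \<cdot> g') \<cdot> g \<cdot> f = cid C (cdom C f)"
    using assms f' g' by (simp add: comp_assoc comp_cancel)
  moreover have "(g \<cdot> f) \<cdot> f' \<cdot> g' = cid C (ccod C g)"
    using assms f' g' by (simp add: comp_assoc comp_cancel)
  ultimately show ?thesis unfolding is_iso_def
    using assms f' g' by (intro exI[of _ "f' \<cdot> g'"]) simp
qed

lemma is_monoD:
  "is_mono C h \<Longrightarrow> ccod C x = cdom C h \<Longrightarrow> ccod C y = cdom C h \<Longrightarrow> cdom C x = cdom C y \<Longrightarrow>
    h \<cdot> x = h \<cdot> y \<Longrightarrow> x = y"
  unfolding is_mono_def by blast

lemma is_mono_if_retraction:
  assumes "ccod C f = cdom C r" "r \<cdot> f = cid C (cdom C f)"
  shows "is_mono C f"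
  unfolding is_mono_def
proof (intro allI impI)
  fix x y assume xy: "ccod C x = cdom C f" "ccod C y = cdom C f" "cdom C x = cdom C y" "f \<cdot> x = f \<cdot> y"
  have "x = r \<cdot> f \<cdot> x" using assms xy(1) by (simp add: comp_cancel)
  also have "\<dots> = y" using assms xy(2,4) by (simp add: comp_cancel)
  finally show "x = y" .
qed

lemma is_mono_comp:
  assumes "is_mono C f" "is_mono C g" "ccod C f = cdom C g"
  shows "is_mono C (g \<cdot> f)"
  unfolding is_mono_def
proof (intro allI impI)
  fix x y assume xy: "ccod C x = cdom C (g \<cdot> f)" "ccod C y = cdom C (g \<cdot> f)"
    "cdom C x = cdom C y" "(g \<cdot> f) \<cdot> x = (g \<cdot> f) \<cdot> y"
  then have "g \<cdot> f \<cdot> x = g \<cdot> f \<cdot> y" using assms(3) by (simp add: comp_assoc)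
  then have "f \<cdot> x = f \<cdot> y" using is_monoD[OF assms(2)] xy assms(3) by simp
  then show "x = y" using is_monoD[OF assms(1)] xy assms(3) by simp
qed

lemma is_mono_comp_cancel:
  assumes "is_mono C (g \<cdot> f)" "ccod C f = cdom C g"
  shows "is_mono C f"
  unfolding is_mono_def
proof (intro allI impI)
  fix x y assume xy: "ccod C x = cdom C f" "ccod C y = cdom C f" "cdom C x = cdom C y" "f \<cdot> x = f \<cdot> y"
  then have "(g \<cdot> f) \<cdot> x = (g \<cdot> f) \<cdot> y" using assms(2) by (simp add: comp_assoc)
  then show "x = y" using is_monoD[OF assms(1)] xy assms(2) by simp
qed

lemma iso_obj_refl [simp]: "iso_obj C a a"
  unfolding iso_obj_def by (rule exI[of _ "cid C a"]) simp

lemma iso_obj_sym: "iso_obj C a b \<Longrightarrow> iso_obj C b a"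
  unfolding iso_obj_def by (metis is_isoE)

lemma iso_obj_trans [trans]: "iso_obj C a b \<Longrightarrow> iso_obj C b c \<Longrightarrow> iso_obj C a c"
  unfolding iso_obj_def by (metis comp_cod comp_dom is_iso_comp)

lemma iso_obj_if_mono_factor:
  assumes "is_mono C h" "is_mono C h'" "ccod C h = cdom C u"
    and "cdom C k = cdom C h'" "ccod C k = cdom C h" "cdom C k' = cdom C h" "ccod C k' = cdom C h'"
    and "h \<cdot> k \<cdot> k' = h" "u \<cdot> h \<cdot> k = h'"
  shows "iso_obj C (cdom C h) (cdom C h')"
proof -
  have kk': "k \<cdot> k' = cid C (cdom C h)"
    by (rule is_monoD[OF assms(1)]) (use assms(3-8) in simp_all)
  have "h' \<cdot> k' \<cdot> k = (u \<cdot> h \<cdot> k) \<cdot> k' \<cdot> k" by (simp only: assms(9))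
  also have "\<dots> = u \<cdot> h \<cdot> (k \<cdot> k') \<cdot> k" using assms(3-7) by (simp add: comp_assoc)
  also have "\<dots> = h' \<cdot> cid C (cdom C h')" using assms kk' by simp
  finally have eq: "h' \<cdot> k' \<cdot> k = h' \<cdot> cid C (cdom C h')" .
  have "k' \<cdot> k = cid C (cdom C h')"
    by (rule is_monoD[OF assms(2) _ _ _ eq]) (use assms(4-7) in simp_all)
  then show ?thesis
    unfolding iso_obj_def is_iso_def using assms(4-7) kk' by (intro exI[of _ k']) auto
qed

definition im_mono :: "'m \<Rightarrow> 'm" where
  "im_mono f = (SOME h. is_image C f h)"

lemma is_image_im_mono: "is_image C f (im_mono f)"
  using has_images unfolding has_images_def im_mono_def by (metis someI)

lemma im_obj_eq: "im_obj C f = cdom C (im_mono f)"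
  unfolding im_obj_def im_mono_def by simp

lemma is_imageE:
  assumes "is_image C f h"
  obtains g where "cdom C g = cdom C f" "ccod C g = cdom C h" "h \<cdot> g = f"
    "is_mono C h" "ccod C h = ccod C f"
  using assms unfolding is_image_def by blast

lemma is_image_lift:
  assumes "is_image C f h" "is_mono C h'" "ccod C h' = ccod C f"
    "cdom C g' = cdom C f" "ccod C g' = cdom C h'" "h' \<cdot> g' = f"
  shows "\<exists>k. cdom C k = cdom C h \<and> ccod C k = cdom C h' \<and> h' \<cdot> k = h"
  using assms unfolding is_image_def by blast

lemma is_image_iso_obj:
  assumes "is_image C f h1" "is_image C f h2"
  shows "iso_obj C (cdom C h1) (cdom C h2)"
proof -
  obtain g1 where g1: "cdom C g1 = cdom C f" "ccod C g1 = cdom C h1" "h1 \<cdot> g1 = f"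
    "is_mono C h1" "ccod C h1 = ccod C f" using assms(1) by (rule is_imageE)
  obtain g2 where g2: "cdom C g2 = cdom C f" "ccod C g2 = cdom C h2" "h2 \<cdot> g2 = f"
    "is_mono C h2" "ccod C h2 = ccod C f" using assms(2) by (rule is_imageE)
  obtain k where k: "cdom C k = cdom C h1" "ccod C k = cdom C h2" "h2 \<cdot> k = h1"
    using is_image_lift[OF assms(1) g2(4,5,1,2,3)] by blast
  obtain k' where k': "cdom C k' = cdom C h2" "ccod C k' = cdom C h1" "h1 \<cdot> k' = h2"
    using is_image_lift[OF assms(2) g1(4,5,1,2,3)] by blast
  have "h2 \<cdot> k \<cdot> k' = (h2 \<cdot> k) \<cdot> k'" using k(1,2) k'(1,2) by (simp add: comp_assoc)
  also have "\<dots> = h2" using k k' by simp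
  finally have "h2 \<cdot> k \<cdot> k' = h2" .
  moreover have "cid C (ccod C f) \<cdot> h2 \<cdot> k = h1" using k g1 by simp
  ultimately have "iso_obj C (cdom C h2) (cdom C h1)"
    by (intro iso_obj_if_mono_factor[OF g2(4) g1(4) _ k(1,2) k'(1,2)]) (use g2 in simp_all)
  then show ?thesis by (rule iso_obj_sym)
qed

lemma iso_obj_im_comp_split_epi:
  assumes "ccod C e = cdom C f" "ccod C s = cdom C e" "e \<cdot> s = cid C (cdom C f)"
  shows "iso_obj C (im_obj C (f \<cdot> e)) (im_obj C f)"
proof -
  let ?h = "im_mono f"
  obtain g where g: "cdom C g = cdom C f" "ccod C g = cdom C ?h" "?h \<cdot> g = f"
    "is_mono C ?h" "ccod C ?h = ccod C f" using is_image_im_mono by (rule is_imageE)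
  have sdom: "cdom C s = cdom C f" using comp_dom[OF assms(2)] assms(3) by simp
  have "is_image C (f \<cdot> e) ?h"
    unfolding is_image_def
  proof (intro conjI allI impI)
    show "\<exists>g'. cdom C g' = cdom C (f \<cdot> e) \<and> ccod C g' = cdom C ?h \<and> ?h \<cdot> g' = f \<cdot> e"
      using assms g by (intro exI[of _ "g \<cdot> e"]) (simp flip: comp_assoc)
  next
    fix h' g' assume H: "is_mono C h' \<and> ccod C h' = ccod C (f \<cdot> e) \<and> cdom C g' = cdom C (f \<cdot> e)
      \<and> ccod C g' = cdom C h' \<and> h' \<cdot> g' = f \<cdot> e"
    have "h' \<cdot> g' \<cdot> s = (f \<cdot> e) \<cdot> s"
      using H assms by (simp flip: comp_assoc)
    also have "\<dots> = f" using assms by (simp add: comp_assoc)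
    finally have "h' \<cdot> g' \<cdot> s = f" .
    then show "\<exists>k. cdom C k = cdom C ?h \<and> ccod C k = cdom C h' \<and> h' \<cdot> k = ?h"
      by (intro is_image_lift[OF is_image_im_mono]) (use H assms sdom in simp_all)
  qed (use g assms in simp_all)
  then show ?thesis unfolding im_obj_eq by (rule is_image_iso_obj[OF is_image_im_mono])
qed

lemma iso_obj_im_comp_split_mono:
  assumes "ccod C f = cdom C m" "cdom C r = ccod C m" "r \<cdot> m = cid C (ccod C f)"
  shows "iso_obj C (im_obj C (m \<cdot> f)) (im_obj C f)"
proof -
  let ?h = "im_mono f" and ?H = "im_mono (m \<cdot> f)"
  have mono_m: "is_mono C m" using assms by (intro is_mono_if_retraction[of m r]) auto
  obtain g where g: "cdom C g = cdom C f" "ccod C g = cdom C ?h" "?h \<cdot> g = f"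
    "is_mono C ?h" "ccod C ?h = ccod C f" using is_image_im_mono by (rule is_imageE)
  obtain G where G: "cdom C G = cdom C f" "ccod C G = cdom C ?H" "?H \<cdot> G = m \<cdot> f"
    "is_mono C ?H" "ccod C ?H = ccod C m"
    using is_image_im_mono[of "m \<cdot> f"] assms by (auto elim: is_imageE)
  have mono_mh: "is_mono C (m \<cdot> ?h)" using is_mono_comp[OF g(4) mono_m] g assms by simp
  have "(m \<cdot> ?h) \<cdot> g = m \<cdot> f" using g assms(1) by (simp add: comp_assoc)
  then have "\<exists>k. cdom C k = cdom C ?H \<and> ccod C k = cdom C (m \<cdot> ?h) \<and> (m \<cdot> ?h) \<cdot> k = ?H"
    by (intro is_image_lift[OF is_image_im_mono mono_mh]) (use g assms(1) in simp_all)
  then obtain k where k: "cdom C k = cdom C ?H" "ccod C k = cdom C ?h" "(m \<cdot> ?h) \<cdot> k = ?H"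
    using g(5) assms(1) by auto
  have "r \<cdot> ?H = r \<cdot> (m \<cdot> ?h) \<cdot> k" by (simp only: k(3))
  also have "\<dots> = ?h \<cdot> k" using g k(1,2) assms by (simp add: comp_assoc comp_cancel)
  finally have rH: "r \<cdot> ?H = ?h \<cdot> k" .
  have "is_mono C ((m \<cdot> ?h) \<cdot> k)" using G(4) k(3) by simp
  then have "is_mono C k" by (rule is_mono_comp_cancel) (use k(2) g(5) assms(1) in simp)
  then have mono_hk: "is_mono C (?h \<cdot> k)" using is_mono_comp g(4) k(2) by blast
  have "(r \<cdot> ?H) \<cdot> G = r \<cdot> m \<cdot> f" using G(1,2,3,5) assms by (simp add: comp_assoc)
  then have "(?h \<cdot> k) \<cdot> G = f" using assms rH by (simp add: comp_cancel)
  then have "\<exists>k'. cdom C k' = cdom C ?h \<and> ccod C k' = cdom C (?h \<cdot> k) \<and> (?h \<cdot> k) \<cdot> k' = ?h"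
    by (intro is_image_lift[OF is_image_im_mono mono_hk]) (use G(1,2) g(5) k(1,2) in simp_all)
  then obtain k' where k': "cdom C k' = cdom C ?h" "ccod C k' = cdom C ?H" "(?h \<cdot> k) \<cdot> k' = ?h"
    using k(1,2) by auto
  have "ccod C ?h = cdom C m" using g(5) assms(1) by simp
  moreover have "?h \<cdot> k \<cdot> k' = ?h" using k'(3) g k(1,2) k'(1,2) by (simp add: comp_assoc)
  moreover have "m \<cdot> ?h \<cdot> k = ?H" using k(3) g k(1,2) assms by (simp add: comp_assoc)
  ultimately have "iso_obj C (cdom C ?h) (cdom C ?H)"
    by (rule iso_obj_if_mono_factor[OF g(4) G(4) _ k(1,2) k'(1,2)])
  then show ?thesis unfolding im_obj_eq by (rule iso_obj_sym)
qed

lemma iso_obj_im_comp_split: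
  assumes "ccod C e = cdom C f" "ccod C f = cdom C m"
    and "ccod C s = cdom C e" "e \<cdot> s = cid C (cdom C f)"
    and "cdom C r = ccod C m" "r \<cdot> m = cid C (ccod C f)"
  shows "iso_obj C (im_obj C (m \<cdot> f \<cdot> e)) (im_obj C f)"
proof -
  have "iso_obj C (im_obj C (m \<cdot> f \<cdot> e)) (im_obj C (f \<cdot> e))"
    by (rule iso_obj_im_comp_split_mono) (use assms in simp_all)
  also have "iso_obj C \<dots> (im_obj C f)"
    by (rule iso_obj_im_comp_split_epi) (use assms in simp_all)
  finally show ?thesis .
qed

lemma iso_obj_im_comp_iso:
  assumes "is_iso C a" "is_iso C b" "ccod C a = cdom C f" "ccod C f = cdom C b"
  shows "iso_obj C (im_obj C (b \<cdot> f \<cdot> a)) (im_obj C f)"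
proof -
  obtain a' where a': "cdom C a' = ccod C a" "ccod C a' = cdom C a" "a \<cdot> a' = cid C (ccod C a)"
    using assms(1) by (rule is_isoE)
  obtain b' where b': "cdom C b' = ccod C b" "ccod C b' = cdom C b" "b' \<cdot> b = cid C (cdom C b)"
    using assms(2) by (rule is_isoE)
  show ?thesis
    by (rule iso_obj_im_comp_split[of a f b a' b']) (use assms a' b' in simp_all)
qed

text \<open>The image of \<open>\<alpha>\<close> survives pre-composition with \<open>\<psi>\<^sub>1\<close> and post-composition with \<open>\<phi>\<^sub>2\<close>
  because the isomorphisms \<open>\<psi>\<^sub>1 \<cdot> \<phi>\<^sub>1\<close> and \<open>\<psi>\<^sub>2 \<cdot> \<phi>\<^sub>2\<close> make \<open>\<psi>\<^sub>1\<close> split epi and \<open>\<phi>\<^sub>2\<close> split mono.\<close>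

lemma iso_obj_im_sandwich:
  assumes "ccod C \<phi>1 = cdom C \<psi>1" "ccod C \<psi>1 = cdom C \<alpha>" "ccod C \<alpha> = cdom C \<phi>2"
    "ccod C \<phi>2 = cdom C \<psi>2" "is_iso C (\<psi>1 \<cdot> \<phi>1)" "is_iso C (\<psi>2 \<cdot> \<phi>2)"
  shows "iso_obj C (im_obj C (\<phi>2 \<cdot> \<alpha> \<cdot> \<psi>1)) (im_obj C \<alpha>)"
proof -
  obtain i1 where i1: "cdom C i1 = ccod C \<psi>1" "ccod C i1 = cdom C \<phi>1"
      "(\<psi>1 \<cdot> \<phi>1) \<cdot> i1 = cid C (ccod C \<psi>1)"
    using is_isoE[OF assms(5)] assms(1) by auto
  obtain i2 where i2: "cdom C i2 = ccod C \<psi>2" "ccod C i2 = cdom C \<phi>2"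
      "i2 \<cdot> (\<psi>2 \<cdot> \<phi>2) = cid C (cdom C \<phi>2)"
    using is_isoE[OF assms(6)] assms(4) by auto
  have "\<psi>1 \<cdot> \<phi>1 \<cdot> i1 = cid C (cdom C \<alpha>)" using i1 assms(1,2) by (simp add: comp_assoc)
  moreover have "(i2 \<cdot> \<psi>2) \<cdot> \<phi>2 = cid C (ccod C \<alpha>)" using i2 assms(3,4) by (simp add: comp_assoc)
  ultimately show ?thesis
    using iso_obj_im_comp_split[of \<psi>1 \<alpha> \<phi>2 "\<phi>1 \<cdot> i1" "i2 \<cdot> \<psi>2"] assms(1-4) i1 i2 by simp
qed

lemma ctensm_dom [simp]: "cdom C (ctensm C f g) = ctens C (cdom C f) (cdom C g)"
  and ctensm_cod [simp]: "ccod C (ctensm C f g) = ctens C (ccod C f) (ccod C g)"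
  using smc unfolding is_smc_def by auto

lemma ctensm_cid [simp]: "ctensm C (cid C a) (cid C b) = cid C (ctens C a b)"
  using smc unfolding is_smc_def by auto

lemma ctensm_comp:
  "ccod C f = cdom C g \<Longrightarrow> ccod C f' = cdom C g' \<Longrightarrow>
    ctensm C (g \<cdot> f) (g' \<cdot> f') = ctensm C g g' \<cdot> ctensm C f f'"
  using smc unfolding is_smc_def by auto

lemma is_iso_ctensm:
  assumes "is_iso C f" "is_iso C g"
  shows "is_iso C (ctensm C f g)"
proof -
  obtain f' where f': "cdom C f' = ccod C f" "ccod C f' = cdom C f"
    "f' \<cdot> f = cid C (cdom C f)" "f \<cdot> f' = cid C (ccod C f)"
    using assms(1) by (rule is_isoE)
  obtain g' where g': "cdom C g' = ccod C g" "ccod C g' = cdom C g"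
    "g' \<cdot> g = cid C (cdom C g)" "g \<cdot> g' = cid C (ccod C g)"
    using assms(2) by (rule is_isoE)
  have "ctensm C f' g' \<cdot> ctensm C f g = cid C (cdom C (ctensm C f g))"
    using ctensm_comp[of f f' g g'] f' g' by simp
  moreover have "ctensm C f g \<cdot> ctensm C f' g' = cid C (ccod C (ctensm C f g))"
    using ctensm_comp[of f' f g' g] f' g' by simp
  ultimately show ?thesis
    unfolding is_iso_def using f' g' by (intro exI[of _ "ctensm C f' g'"]) simp
qed

lemma iso_obj_ctens:
  "iso_obj C a a' \<Longrightarrow> iso_obj C b b' \<Longrightarrow> iso_obj C (ctens C a b) (ctens C a' b')"
  unfolding iso_obj_def using is_iso_ctensm ctensm_dom ctensm_cod by metis

lemma iso_obj_ctens_assoc: "iso_obj C (ctens C (ctens C a b) c) (ctens C a (ctens C b c))"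
  using smc unfolding is_smc_def iso_obj_def by (elim conjE) blast

lemma iso_obj_ctens_unit_left: "iso_obj C (ctens C (cunit C) a) a"
  using smc unfolding is_smc_def iso_obj_def by (elim conjE) blast

lemma iso_obj_ctens_unit_right: "iso_obj C (ctens C a (cunit C)) a"
  using smc unfolding is_smc_def iso_obj_def by (elim conjE) blast

lemma iso_obj_ctens_commute: "iso_obj C (ctens C a b) (ctens C b a)"
  using smc unfolding is_smc_def iso_obj_def by (elim conjE) blast

lemma iso_obj_ctens_left_commute: "iso_obj C (ctens C a (ctens C b c)) (ctens C b (ctens C a c))"
proof -
  have "iso_obj C (ctens C a (ctens C b c)) (ctens C (ctens C a b) c)"
    by (rule iso_obj_sym[OF iso_obj_ctens_assoc])
  also have "iso_obj C \<dots> (ctens C (ctens C b a) c)"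
    by (rule iso_obj_ctens[OF iso_obj_ctens_commute iso_obj_refl])
  also have "iso_obj C \<dots> (ctens C b (ctens C a c))"
    by (rule iso_obj_ctens_assoc)
  finally show ?thesis .
qed

end

section \<open>The group completion of isomorphism classes\<close>

text \<open>Iterated tensor products are rearranged up to isomorphism by comparing the multisets of
  their factors; this replaces the coherence theorem for symmetric monoidal categories.\<close>

datatype 'a tensor_expr = Atom 'a | Tensor "'a tensor_expr" "'a tensor_expr" | Unit

fun atoms :: "'a tensor_expr \<Rightarrow> 'a list" where
  "atoms (Atom a) = [a]"
| "atoms (Tensor x y) = atoms x @ atoms y"
| "atoms Unit = []"

context smc_images
begin

fun tensor_eval :: "'o tensor_expr \<Rightarrow> 'o" where
  "tensor_eval (Atom a) = a"
| "tensor_eval (Tensor x y) = ctens C (tensor_eval x) (tensor_eval y)"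
| "tensor_eval Unit = cunit C"

definition tensor_list :: "'o list \<Rightarrow> 'o" where
  "tensor_list xs = foldr (ctens C) xs (cunit C)"

lemma tensor_list_simps [simp]:
  "tensor_list [] = cunit C" "tensor_list (x # xs) = ctens C x (tensor_list xs)"
  unfolding tensor_list_def by simp_all

lemma iso_obj_tensor_list_append:
  "iso_obj C (tensor_list (xs @ ys)) (ctens C (tensor_list xs) (tensor_list ys))"
proof (induction xs)
  case Nil
  then show ?case using iso_obj_ctens_unit_left iso_obj_sym by simp
next
  case (Cons x xs)
  have "iso_obj C (ctens C x (tensor_list (xs @ ys))) (ctens C x (ctens C (tensor_list xs) (tensor_list ys)))"
    using iso_obj_ctens[OF iso_obj_refl Cons.IH] .
  also have "iso_obj C \<dots> (ctens C (ctens C x (tensor_list xs)) (tensor_list ys))"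
    by (rule iso_obj_sym[OF iso_obj_ctens_assoc])
  finally show ?case by simp
qed

lemma iso_obj_tensor_eval_list: "iso_obj C (tensor_eval x) (tensor_list (atoms x))"
proof (induction x)
  case (Atom a)
  show ?case using iso_obj_sym[OF iso_obj_ctens_unit_right] by simp
next
  case (Tensor x y)
  have "iso_obj C (tensor_eval (Tensor x y)) (ctens C (tensor_list (atoms x)) (tensor_list (atoms y)))"
    using iso_obj_ctens[OF Tensor.IH] by simp
  also have "iso_obj C \<dots> (tensor_list (atoms (Tensor x y)))"
    using iso_obj_sym[OF iso_obj_tensor_list_append] by simp
  finally show ?case .
qed simp

lemma iso_obj_tensor_list_remove1:
  "x \<in> set ys \<Longrightarrow> iso_obj C (tensor_list ys) (ctens C x (tensor_list (remove1 x ys)))"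
proof (induction ys)
  case (Cons y ys)
  show ?case
  proof (cases "x = y")
    case False
    then have "iso_obj C (ctens C y (tensor_list ys)) (ctens C y (ctens C x (tensor_list (remove1 x ys))))"
      using Cons iso_obj_ctens[OF iso_obj_refl] by simp
    also have "iso_obj C \<dots> (ctens C x (ctens C y (tensor_list (remove1 x ys))))"
      by (rule iso_obj_ctens_left_commute)
    finally show ?thesis using False by simp
  qed simp
qed simp

lemma iso_obj_tensor_list_perm:
  "mset xs = mset ys \<Longrightarrow> iso_obj C (tensor_list xs) (tensor_list ys)"
proof (induction xs arbitrary: ys)
  case (Cons x xs)
  then have x: "x \<in> set ys" by (metis list.set_intros(1) set_mset_mset)
  have "mset xs = mset (remove1 x ys)"
    using Cons.prems by (simp add: mset_remove1, metis add_mset_remove_trivial)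
  then have "iso_obj C (tensor_list (x # xs)) (ctens C x (tensor_list (remove1 x ys)))"
    using iso_obj_ctens[OF iso_obj_refl Cons.IH] by simp
  then show ?case using iso_obj_trans[OF _ iso_obj_sym[OF iso_obj_tensor_list_remove1[OF x]]] by blast
qed simp

lemma iso_obj_tensor_eval_perm:
  "mset (atoms x) = mset (atoms y) \<Longrightarrow> iso_obj C (tensor_eval x) (tensor_eval y)"
  by (metis iso_obj_sym iso_obj_tensor_eval_list iso_obj_tensor_list_perm iso_obj_trans)

definition groth_rel :: "'o \<times> 'o \<Rightarrow> 'o \<times> 'o \<Rightarrow> bool" where
  "groth_rel ab cd \<longleftrightarrow>
     (\<exists>k. iso_obj C (ctens C (ctens C (fst ab) (snd cd)) k) (ctens C (ctens C (fst cd) (snd ab)) k))"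

lemma Gcls_eq_groth_rel: "Gcls C ab = {cd. groth_rel ab cd}"
  unfolding Gcls_def groth_rel_def by auto

lemma groth_rel_I: "iso_obj C (ctens C p s) (ctens C r q) \<Longrightarrow> groth_rel (p, q) (r, s)"
  unfolding groth_rel_def using iso_obj_ctens[OF _ iso_obj_refl] by auto

lemma groth_rel_refl: "groth_rel ab ab"
  unfolding groth_rel_def by auto

lemma groth_rel_sym: "groth_rel ab cd \<Longrightarrow> groth_rel cd ab"
  unfolding groth_rel_def using iso_obj_sym by blast

lemma groth_rel_trans:
  assumes "groth_rel (a, b) (c, d)" "groth_rel (c, d) (e, f)"
  shows "groth_rel (a, b) (e, f)"
proof -
  obtain k where k: "iso_obj C (ctens C (ctens C a d) k) (ctens C (ctens C c b) k)"
    using assms(1) unfolding groth_rel_def by auto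
  obtain k' where k': "iso_obj C (ctens C (ctens C c f) k') (ctens C (ctens C e d) k')"
    using assms(2) unfolding groth_rel_def by auto
  define K where "K = ctens C (ctens C c d) (ctens C k k')"
  have "iso_obj C (ctens C (ctens C a f) K) (ctens C (ctens C (ctens C a d) k) (ctens C (ctens C c f) k'))"
    unfolding K_def
    using iso_obj_tensor_eval_perm[of
      "Tensor (Tensor (Atom a) (Atom f)) (Tensor (Tensor (Atom c) (Atom d)) (Tensor (Atom k) (Atom k')))"
      "Tensor (Tensor (Tensor (Atom a) (Atom d)) (Atom k)) (Tensor (Tensor (Atom c) (Atom f)) (Atom k'))"]
    by (simp add: add_mset_commute)
  also have "iso_obj C \<dots> (ctens C (ctens C (ctens C c b) k) (ctens C (ctens C e d) k'))"
    by (rule iso_obj_ctens[OF k k'])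
  also have "iso_obj C \<dots> (ctens C (ctens C e b) K)"
    unfolding K_def
    using iso_obj_tensor_eval_perm[of
      "Tensor (Tensor (Tensor (Atom c) (Atom b)) (Atom k)) (Tensor (Tensor (Atom e) (Atom d)) (Atom k'))"
      "Tensor (Tensor (Atom e) (Atom b)) (Tensor (Tensor (Atom c) (Atom d)) (Tensor (Atom k) (Atom k')))"]
    by (simp add: add_mset_commute)
  finally show ?thesis unfolding groth_rel_def by auto
qed

lemma groth_rel_trans': "groth_rel ab cd \<Longrightarrow> groth_rel cd ef \<Longrightarrow> groth_rel ab ef"
  using groth_rel_trans by (metis prod.collapse)

lemma Gcls_eq_iff: "Gcls C ab = Gcls C cd \<longleftrightarrow> groth_rel ab cd"
proof
  assume "Gcls C ab = Gcls C cd"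
  then show "groth_rel ab cd" using groth_rel_refl unfolding Gcls_eq_groth_rel by blast
next
  assume "groth_rel ab cd"
  then show "Gcls C ab = Gcls C cd"
    unfolding Gcls_eq_groth_rel using groth_rel_trans' groth_rel_sym by blast
qed

lemma groth_rel_Grep: "groth_rel ab (Grep (Gcls C ab))"
proof -
  have "ab \<in> Gcls C ab" unfolding Gcls_eq_groth_rel using groth_rel_refl by auto
  then have "Grep (Gcls C ab) \<in> Gcls C ab" unfolding Grep_def by (rule someI)
  then show ?thesis unfolding Gcls_eq_groth_rel by auto
qed

lemma AC_mult: "Gcls C (a, b) \<otimes>\<^bsub>AC C\<^esub> Gcls C (c, d) = Gcls C (ctens C a c, ctens C b d)"
proof -
  obtain a' b' where ab: "Grep (Gcls C (a, b)) = (a', b')" by force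
  obtain c' d' where cd: "Grep (Gcls C (c, d)) = (c', d')" by force
  obtain k where k: "iso_obj C (ctens C (ctens C a b') k) (ctens C (ctens C a' b) k)"
    using groth_rel_Grep[of "(a, b)"] ab unfolding groth_rel_def by auto
  obtain k' where k': "iso_obj C (ctens C (ctens C c d') k') (ctens C (ctens C c' d) k')"
    using groth_rel_Grep[of "(c, d)"] cd unfolding groth_rel_def by auto
  have "iso_obj C (ctens C (ctens C (ctens C a c) (ctens C b' d')) (ctens C k k'))
     (ctens C (ctens C (ctens C a b') k) (ctens C (ctens C c d') k'))"
    using iso_obj_tensor_eval_perm[of
      "Tensor (Tensor (Tensor (Atom a) (Atom c)) (Tensor (Atom b') (Atom d'))) (Tensor (Atom k) (Atom k'))"
      "Tensor (Tensor (Tensor (Atom a) (Atom b')) (Atom k)) (Tensor (Tensor (Atom c) (Atom d')) (Atom k'))"]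
    by (simp add: add_mset_commute)
  also have "iso_obj C \<dots> (ctens C (ctens C (ctens C a' b) k) (ctens C (ctens C c' d) k'))"
    by (rule iso_obj_ctens[OF k k'])
  also have "iso_obj C \<dots> (ctens C (ctens C (ctens C a' c') (ctens C b d)) (ctens C k k'))"
    using iso_obj_tensor_eval_perm[of
      "Tensor (Tensor (Tensor (Atom a') (Atom b)) (Atom k)) (Tensor (Tensor (Atom c') (Atom d)) (Atom k'))"
      "Tensor (Tensor (Tensor (Atom a') (Atom c')) (Tensor (Atom b) (Atom d))) (Tensor (Atom k) (Atom k'))"]
    by (simp add: add_mset_commute)
  finally have "groth_rel (ctens C a c, ctens C b d) (ctens C a' c', ctens C b' d')"
    unfolding groth_rel_def by auto
  then show ?thesis unfolding AC_def using ab cd Gcls_eq_iff groth_rel_sym by simp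
qed

lemma AC_carrier: "x \<in> carrier (AC C) \<longleftrightarrow> (\<exists>a b. x = Gcls C (a, b))"
  unfolding AC_def by auto

lemma AC_one: "\<one>\<^bsub>AC C\<^esub> = Gcls C (cunit C, cunit C)"
  unfolding AC_def by simp

lemma comm_group_AC: "comm_group (AC C)"
proof (rule comm_groupI)
  fix x y z assume "x \<in> carrier (AC C)" "y \<in> carrier (AC C)" "z \<in> carrier (AC C)"
  then obtain a b c d e f where xyz: "x = Gcls C (a, b)" "y = Gcls C (c, d)" "z = Gcls C (e, f)"
    unfolding AC_carrier by auto
  have "iso_obj C (ctens C (ctens C (ctens C a c) e) (ctens C b (ctens C d f)))
     (ctens C (ctens C a (ctens C c e)) (ctens C (ctens C b d) f))"
    using iso_obj_tensor_eval_perm[of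
      "Tensor (Tensor (Tensor (Atom a) (Atom c)) (Atom e)) (Tensor (Atom b) (Tensor (Atom d) (Atom f)))"
      "Tensor (Tensor (Atom a) (Tensor (Atom c) (Atom e))) (Tensor (Tensor (Atom b) (Atom d)) (Atom f))"]
    by (simp add: add_mset_commute)
  then show "x \<otimes>\<^bsub>AC C\<^esub> y \<otimes>\<^bsub>AC C\<^esub> z = x \<otimes>\<^bsub>AC C\<^esub> (y \<otimes>\<^bsub>AC C\<^esub> z)"
    using xyz AC_mult Gcls_eq_iff groth_rel_I by simp
next
  fix x y assume "x \<in> carrier (AC C)" "y \<in> carrier (AC C)"
  then obtain a b c d where xy: "x = Gcls C (a, b)" "y = Gcls C (c, d)"
    unfolding AC_carrier by auto
  then show "x \<otimes>\<^bsub>AC C\<^esub> y \<in> carrier (AC C)" using AC_mult AC_carrier by auto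
  have "iso_obj C (ctens C (ctens C a c) (ctens C d b)) (ctens C (ctens C c a) (ctens C b d))"
    using iso_obj_tensor_eval_perm[of "Tensor (Tensor (Atom a) (Atom c)) (Tensor (Atom d) (Atom b))"
      "Tensor (Tensor (Atom c) (Atom a)) (Tensor (Atom b) (Atom d))"]
    by (simp add: add_mset_commute)
  then show "x \<otimes>\<^bsub>AC C\<^esub> y = y \<otimes>\<^bsub>AC C\<^esub> x"
    using xy AC_mult Gcls_eq_iff groth_rel_I by simp
next
  fix x assume "x \<in> carrier (AC C)"
  then obtain a b where x: "x = Gcls C (a, b)" unfolding AC_carrier by auto
  have "iso_obj C (ctens C (ctens C (cunit C) a) b) (ctens C a (ctens C (cunit C) b))"
    using iso_obj_tensor_eval_perm[of "Tensor (Tensor Unit (Atom a)) (Atom b)"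
      "Tensor (Atom a) (Tensor Unit (Atom b))"]
    by (simp add: add_mset_commute)
  then show "\<one>\<^bsub>AC C\<^esub> \<otimes>\<^bsub>AC C\<^esub> x = x"
    using x AC_one AC_mult Gcls_eq_iff groth_rel_I by simp
  have "iso_obj C (ctens C (ctens C b a) (cunit C)) (ctens C (cunit C) (ctens C a b))"
    using iso_obj_tensor_eval_perm[of "Tensor (Tensor (Atom b) (Atom a)) Unit"
      "Tensor Unit (Tensor (Atom a) (Atom b))"]
    by (simp add: add_mset_commute)
  then have "Gcls C (b, a) \<otimes>\<^bsub>AC C\<^esub> x = \<one>\<^bsub>AC C\<^esub>"
    using x AC_one AC_mult Gcls_eq_iff groth_rel_I by simp
  then show "\<exists>y\<in>carrier (AC C). y \<otimes>\<^bsub>AC C\<^esub> x = \<one>\<^bsub>AC C\<^esub>"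
    using AC_carrier by blast
qed (auto simp: AC_one AC_carrier)

lemma cls_carrier [simp]: "cls C a \<in> carrier (AC C)"
  unfolding cls_def AC_carrier by auto

lemma cls_cunit: "cls C (cunit C) = \<one>\<^bsub>AC C\<^esub>"
  unfolding cls_def AC_one by simp

lemma cls_eq_if_iso_obj: "iso_obj C a b \<Longrightarrow> cls C a = cls C b"
  unfolding cls_def Gcls_eq_iff
  by (rule groth_rel_I) (use iso_obj_ctens[OF _ iso_obj_refl] in blast)

end

sublocale smc_images \<subseteq> AC: comm_group "AC C"
  by (rule comm_group_AC)

lemma (in smc_images) Ale_refl: "x \<in> carrier (AC C) \<Longrightarrow> Ale C x x"
  unfolding Ale_def using cls_cunit by (metis AC.r_inv)

section \<open>Constructible persistence modules\<close>

text \<open>Half-open on the left, as in the definition of constructibility: \<open>F u v\<close> is an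
  isomorphism when no critical value lies in \<open>(u, v]\<close>.\<close>

definition crit_free :: "real set \<Rightarrow> real \<Rightarrow> real \<Rightarrow> bool" where
  "crit_free S u v \<longleftrightarrow> (\<forall>s\<in>S. \<not> (min u v < s \<and> s \<le> max u v))"

lemma crit_free_sym: "crit_free S u v = crit_free S v u"
  unfolding crit_free_def by (auto simp: min.commute max.commute)

lemma crit_free_refl [simp]: "crit_free S u u"
  unfolding crit_free_def by auto

lemma crit_free_subset:
  assumes "crit_free S u v" "min u v \<le> min a b" "max a b \<le> max u v"
  shows "crit_free S a b"
  using assms unfolding crit_free_def by (meson le_less_trans order_trans)

lemma crit_free_within:
  assumes "\<forall>s\<in>S. \<not> (l < s \<and> s < r)" "l \<le> u" "l \<le> v" "u < r" "v < r"
  shows "crit_free S u v"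
  using assms unfolding crit_free_def by (auto simp: min_def max_def)

locale constructible_pmod = smc_images C for C :: "('o,'m) smcat" +
  fixes S :: "real set" and F :: "real \<Rightarrow> real \<Rightarrow> 'm"
  assumes constructible: "constructible C S F"
begin

lemma finite_S: "finite S" and S_nonempty: "S \<noteq> {}" and is_pmod: "is_pmod C F"
  using constructible unfolding constructible_def by auto

lemma transition_dom [simp]: "p \<le> q \<Longrightarrow> cdom C (F p q) = pobj C F p"
  and transition_cod [simp]: "p \<le> q \<Longrightarrow> ccod C (F p q) = pobj C F q"
  using is_pmod unfolding is_pmod_def by auto

lemma transition_comp: "p \<le> q \<Longrightarrow> q \<le> r \<Longrightarrow> F q r \<cdot> F p q = F p r"
  using is_pmod unfolding is_pmod_def by auto

lemma is_iso_transition: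
  assumes "u \<le> v" "crit_free S u v"
  shows "is_iso C (F u v)"
proof (cases "v < Min S")
  case True
  then show ?thesis using constructible assms unfolding constructible_def by simp
next
  case False
  have "Min S \<in> S" using finite_S S_nonempty by simp
  then have "Min S \<le> u"
    using assms False unfolding crit_free_def by (auto simp: min_def max_def)
  then show ?thesis
    using constructible assms unfolding constructible_def crit_free_def by (simp add: min_def max_def)
qed

definition im_cls :: "real \<Rightarrow> real \<Rightarrow> ('o \<times> 'o) set" where
  "im_cls x y = cls C (im_obj C (F x y))"

lemma im_cls_eq_start:
  assumes "x \<le> x'" "x' \<le> y" "crit_free S x x'"
  shows "im_cls x y = im_cls x' y"
proof -
  have "iso_obj C (im_obj C (cid C (pobj C F y) \<cdot> F x' y \<cdot> F x x')) (im_obj C (F x' y))"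
    by (rule iso_obj_im_comp_iso) (use assms in \<open>simp_all add: is_iso_transition\<close>)
  then show ?thesis
    unfolding im_cls_def using assms transition_comp[of x x' y] by (simp add: cls_eq_if_iso_obj)
qed

lemma im_cls_eq_end:
  assumes "x \<le> y" "y \<le> y'" "crit_free S y y'"
  shows "im_cls x y = im_cls x y'"
proof -
  have "iso_obj C (im_obj C (F y y' \<cdot> F x y \<cdot> cid C (pobj C F x))) (im_obj C (F x y))"
    by (rule iso_obj_im_comp_iso) (use assms in \<open>simp_all add: is_iso_transition\<close>)
  then show ?thesis
    unfolding im_cls_def using assms transition_comp[of x y y']
    by (simp add: cls_eq_if_iso_obj iso_obj_sym)
qed

lemma im_cls_diag:
  assumes "crit_free S x x'"
  shows "im_cls x x = im_cls x' x'"
proof (cases "x \<le> x'")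
  case True
  then show ?thesis using im_cls_eq_end[of x x x'] im_cls_eq_start[of x x' x'] assms by simp
next
  case False
  then show ?thesis
    using im_cls_eq_end[of x' x' x] im_cls_eq_start[of x' x x] assms by (simp add: crit_free_sym)
qed

lemma im_cls_eq:
  assumes "x \<le> y" "x' \<le> y'" "crit_free S x x'" "crit_free S y y'"
  shows "im_cls x y = im_cls x' y'"
proof (cases "max x x' \<le> min y y'")
  case True
  define a where "a = max x x'"
  define b where "b = min y y'"
  have ab: "x \<le> a" "x' \<le> a" "a \<le> b" "b \<le> y" "b \<le> y'"
    using True unfolding a_def b_def by auto
  have "crit_free S x a" "crit_free S x' a" "crit_free S b y" "crit_free S b y'"
    using assms(3,4) unfolding a_def b_def by (auto intro: crit_free_subset)
  then show ?thesis
    using im_cls_eq_start[of x a y] im_cls_eq_end[of a b y] im_cls_eq_start[of x' a b]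
      im_cls_eq_end[of x' b y'] ab by (simp add: crit_free_sym)
next
  case False
  then have "crit_free S x y \<and> crit_free S x' y'"
    using assms by (auto simp: max_def min_def split: if_splits intro: crit_free_subset)
  then show ?thesis
    using im_cls_eq_end[of x x y] im_cls_eq_end[of x' x' y'] im_cls_diag[OF assms(3)] assms(1,2)
    by simp
qed

lemma last_crit_free_point:
  assumes "x < y"
  obtains u where "x \<le> u" "u < y" "\<forall>s\<in>S. \<not> (u < s \<and> s < y)"
proof
  let ?U = "insert x {s\<in>S. s < y}"
  have fin: "finite ?U" using finite_S by simp
  show "x \<le> Max ?U" by (rule Max_ge[OF fin]) simp
  show "Max ?U < y" using fin assms by (subst Max_less_iff) auto
  show "\<forall>s\<in>S. \<not> (Max ?U < s \<and> s < y)"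
  proof (intro ballI notI)
    fix s assume "s \<in> S" "Max ?U < s \<and> s < y"
    moreover from this have "s \<le> Max ?U" by (intro Max_ge[OF fin]) simp
    ultimately show False by simp
  qed
qed

lemma dFA_IFin_eq_im_cls:
  assumes "x \<le> u" "u < y" "\<forall>s\<in>S. \<not> (u < s \<and> s < y)"
  shows "dFA C S F (IFin x y) = im_cls x u"
proof (cases "y \<in> S")
  case True
  let ?U = "insert x {s\<in>S. s < y}"
  have fin: "finite ?U" using finite_S by simp
  have "x \<le> Max ?U" "Max ?U \<le> u" using fin assms by (auto intro!: Max.boundedI)
  moreover have "crit_free S (Max ?U) u"
    unfolding crit_free_def
  proof (intro ballI notI)
    fix s assume "s \<in> S" "min (Max ?U) u < s \<and> s \<le> max (Max ?U) u"
    then have "s \<in> ?U" "Max ?U < s" using \<open>Max ?U \<le> u\<close> assms(2) by auto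
    then show False using Max_ge[OF fin] by fastforce
  qed
  ultimately have "im_cls x (Max ?U) = im_cls x u" using im_cls_eq[of x "Max ?U" x u] by simp
  then show ?thesis using True by (simp add: im_cls_def)
next
  case False
  have "crit_free S y u"
    unfolding crit_free_def
  proof (intro ballI notI)
    fix s assume "s \<in> S" "min y u < s \<and> s \<le> max y u"
    moreover have "s \<noteq> y" using False \<open>s \<in> S\<close> by blast
    ultimately have "u < s" "s < y" using assms(2) by (auto simp: min_def max_def)
    then show False using assms(3) \<open>s \<in> S\<close> by blast
  qed
  then have "im_cls x y = im_cls x u" using im_cls_eq[of x y x u] assms by simp
  then show ?thesis using False by (simp add: im_cls_def)
qed

lemma dFA_IInf_eq_im_cls:
  assumes "x \<le> u" "\<forall>s\<in>S. s \<le> u"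
  shows "dFA C S F (IInf x) = im_cls x u"
proof -
  let ?w = "Max (insert x S) + 1"
  have fin: "finite (insert x S)" using finite_S by simp
  have below_w: "s < ?w" if "s \<in> insert x S" for s using Max_ge[OF fin that] by simp
  have "crit_free S ?w u"
    unfolding crit_free_def
  proof (intro ballI notI)
    fix s assume "s \<in> S" "min ?w u < s \<and> s \<le> max ?w u"
    moreover have "s < ?w" "s \<le> u" using below_w assms(2) \<open>s \<in> S\<close> by auto
    ultimately show False by (simp add: min_less_iff_disj)
  qed
  then have "im_cls x ?w = im_cls x u" using im_cls_eq[of x ?w x u] below_w[of x] assms by simp
  then show ?thesis by (simp add: im_cls_def)
qed

end

section \<open>Moebius inversion of the type A diagram\<close>

lemma (in comm_group) m_inv_telescope:
  "a \<in> carrier G \<Longrightarrow> b \<in> carrier G \<Longrightarrow> c \<in> carrier G \<Longrightarrow>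
    (a \<otimes> inv b) \<otimes> (b \<otimes> inv c) = a \<otimes> inv c"
  by (simp add: m_assoc flip: m_assoc[of "inv b" b])

lemma (in comm_group) m_inv_cancel_left:
  "x \<in> carrier G \<Longrightarrow> y \<in> carrier G \<Longrightarrow> x \<otimes> (y \<otimes> inv x) = y"
  by (simp add: m_lcomm[of x y])

lemma (in comm_monoid) finprod_UN_disjoint:
  assumes "finite I" "\<And>i. i \<in> I \<Longrightarrow> finite (A i)"
    "\<And>i j. i \<in> I \<Longrightarrow> j \<in> I \<Longrightarrow> i \<noteq> j \<Longrightarrow> A i \<inter> A j = {}"
    "\<And>x. f x \<in> carrier G"
  shows "finprod G f (\<Union>i\<in>I. A i) = finprod G (\<lambda>i. finprod G f (A i)) I"
  using assms
proof (induction I rule: finite_induct)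
  case (insert i I)
  have "A i \<inter> (\<Union>j\<in>I. A j) = {}" using insert.prems(2) insert.hyps by blast
  then have "finprod G f (\<Union>j\<in>insert i I. A j) = finprod G f (A i) \<otimes> finprod G f (\<Union>j\<in>I. A j)"
    by (simp add: finprod_Un_disjoint insert Pi_def)
  also have "finprod G f (\<Union>j\<in>I. A j) = finprod G (\<lambda>i. finprod G f (A i)) I"
    by (rule insert.IH) (use insert in auto)
  finally show ?case using insert by (simp add: Pi_def)
qed simp

lemma nxt_successor:
  assumes "finite S" "b \<in> S" "b < Max S"
  shows "nxt S b \<in> S" "b < nxt S b" "\<And>s. s \<in> S \<Longrightarrow> b < s \<Longrightarrow> nxt S b \<le> s"
proof -
  have "Max S \<in> S" using assms by (intro Max_in) auto
  then have ne: "{s\<in>S. b < s} \<noteq> {}" using assms by auto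
  then have "nxt S b = Min {s\<in>S. b < s}" unfolding nxt_def by auto
  then show "nxt S b \<in> S" "b < nxt S b" "\<And>s. s \<in> S \<Longrightarrow> b < s \<Longrightarrow> nxt S b \<le> s"
    using Min_in[OF _ ne] Min_le[of "{s\<in>S. b < s}"] assms(1) by auto
qed

lemma nxt_Max: "finite S \<Longrightarrow> S \<noteq> {} \<Longrightarrow> nxt S (Max S) = Max S + 1"
  unfolding nxt_def by auto

lemma prv_predecessor:
  assumes "finite S" "a \<in> S" "Min S < a"
  shows "prv S a \<in> S" "prv S a < a" "\<And>s. s \<in> S \<Longrightarrow> s < a \<Longrightarrow> s \<le> prv S a"
proof -
  have "Min S \<in> S" using assms by (intro Min_in) auto
  then have ne: "{s\<in>S. s < a} \<noteq> {}" using assms by auto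
  then have "prv S a = Max {s\<in>S. s < a}" unfolding prv_def by auto
  then show "prv S a \<in> S" "prv S a < a" "\<And>s. s \<in> S \<Longrightarrow> s < a \<Longrightarrow> s \<le> prv S a"
    using Max_in[OF _ ne] Max_ge[of "{s\<in>S. s < a}"] assms(1) by auto
qed

lemma prv_Min: "finite S \<Longrightarrow> S \<noteq> {} \<Longrightarrow> prv S (Min S) = Min S - 1"
  unfolding prv_def by auto

lemma prv_le:
  assumes "finite S" "a \<in> S"
  shows "prv S a \<le> a"
proof (cases "Min S < a")
  case False
  then have "a = Min S" using Min_le[OF assms] by simp
  moreover have "S \<noteq> {}" using assms(2) by auto
  ultimately show ?thesis using prv_Min[OF assms(1)] by simp
qed (use prv_predecessor(2)[OF assms] in simp)

context comm_group
begin

lemma finprod_telescope_nxt: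
  assumes fin: "finite S" and f: "\<And>x. f x \<in> carrier G"
  shows "finprod G (\<lambda>b. f b \<otimes> inv f (nxt S b)) {b\<in>S. y \<le> b} =
     (if {b\<in>S. y \<le> b} = {} then \<one> else f (Min {b\<in>S. y \<le> b}) \<otimes> inv f (Max S + 1))"
proof (induction "card {b\<in>S. y \<le> b}" arbitrary: y rule: less_induct)
  case less
  let ?B = "{b\<in>S. y \<le> b}" and ?g = "\<lambda>b. f b \<otimes> inv f (nxt S b)"
  show ?case
  proof (cases "?B = {}")
    case True
    then show ?thesis by (simp only: True finprod_empty if_True)
  next
    case False
    define b1 where "b1 = Min ?B"
    have finB: "finite ?B" using fin by simp
    have b1: "b1 \<in> S" "y \<le> b1" "\<And>b. b \<in> ?B \<Longrightarrow> b1 \<le> b"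
      using Min_in[OF finB False] Min_le[OF finB] unfolding b1_def by auto
    have split: "?B = insert b1 {b\<in>S. b1 < b}" using b1 by force
    have "finprod G ?g ?B = ?g b1 \<otimes> finprod G ?g {b\<in>S. b1 < b}"
      unfolding split using fin f by (subst finprod_insert) (auto simp: Pi_def)
    also have "\<dots> = f b1 \<otimes> inv f (Max S + 1)"
    proof (cases "b1 < Max S")
      case True
      note n = nxt_successor[OF fin b1(1) True]
      have eq: "{b\<in>S. b1 < b} = {b\<in>S. nxt S b1 \<le> b}" using n by force
      have "card {b\<in>S. nxt S b1 \<le> b} < card ?B"
        unfolding split eq[symmetric] using fin by (simp add: card_insert_if)
      moreover have "Min {b\<in>S. nxt S b1 \<le> b} = nxt S b1"
        using n fin by (intro Min_eqI) auto
      ultimately have "finprod G ?g {b\<in>S. b1 < b} = f (nxt S b1) \<otimes> inv f (Max S + 1)"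
        using less.hyps n(1) unfolding eq by fastforce
      then show ?thesis using m_inv_telescope f by simp
    next
      case False
      then have b1_Max: "b1 = Max S" using Max_ge[OF fin b1(1)] by simp
      then have empty: "{b\<in>S. b1 < b} = {}" using Max_ge[OF fin] by force
      have "S \<noteq> {}" using b1(1) by auto
      then show ?thesis unfolding empty using b1_Max nxt_Max[OF fin] f by simp
    qed
    finally show ?thesis unfolding b1_def if_not_P[OF False] .
  qed
qed

lemma finprod_telescope_prv:
  assumes fin: "finite S" and f: "\<And>x. f x \<in> carrier G"
  shows "finprod G (\<lambda>a. f a \<otimes> inv f (prv S a)) {a\<in>S. a \<le> x} =
     (if {a\<in>S. a \<le> x} = {} then \<one> else f (Max {a\<in>S. a \<le> x}) \<otimes> inv f (Min S - 1))"
proof (induction "card {a\<in>S. a \<le> x}" arbitrary: x rule: less_induct)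
  case less
  let ?A = "{a\<in>S. a \<le> x}" and ?g = "\<lambda>a. f a \<otimes> inv f (prv S a)"
  show ?case
  proof (cases "?A = {}")
    case True
    then show ?thesis by (simp only: True finprod_empty if_True)
  next
    case False
    define a1 where "a1 = Max ?A"
    have finA: "finite ?A" using fin by simp
    have a1: "a1 \<in> S" "a1 \<le> x" "\<And>a. a \<in> ?A \<Longrightarrow> a \<le> a1"
      using Max_in[OF finA False] Max_ge[OF finA] unfolding a1_def by auto
    have split: "?A = insert a1 {a\<in>S. a < a1}" using a1 by force
    have "finprod G ?g ?A = ?g a1 \<otimes> finprod G ?g {a\<in>S. a < a1}"
      unfolding split using fin f by (subst finprod_insert) (auto simp: Pi_def)
    also have "\<dots> = f a1 \<otimes> inv f (Min S - 1)"
    proof (cases "Min S < a1")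
      case True
      note p = prv_predecessor[OF fin a1(1) True]
      have eq: "{a\<in>S. a < a1} = {a\<in>S. a \<le> prv S a1}" using p by force
      have "card {a\<in>S. a \<le> prv S a1} < card ?A"
        unfolding split eq[symmetric] using fin by (simp add: card_insert_if)
      moreover have "Max {a\<in>S. a \<le> prv S a1} = prv S a1"
        using p fin by (intro Max_eqI) auto
      ultimately have "finprod G ?g {a\<in>S. a < a1} = f (prv S a1) \<otimes> inv f (Min S - 1)"
        using less.hyps p(1) unfolding eq by fastforce
      then show ?thesis using m_inv_telescope f by simp
    next
      case False
      then have a1_Min: "a1 = Min S" using Min_le[OF fin a1(1)] by simp
      then have empty: "{a\<in>S. a < a1} = {}" using Min_le[OF fin] by force
      have "S \<noteq> {}" using a1(1) by auto
      then show ?thesis unfolding empty using a1_Min prv_Min[OF fin] f by simp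
    qed
    finally show ?thesis unfolding a1_def if_not_P[OF False] .
  qed
qed

end

declare FA.simps [simp del] dFA.simps [simp del]

lemma contains_grow [simp]: "contains (grow \<epsilon> J) (grow \<epsilon> I) = contains J I"
  by (cases J; cases I) auto

lemma inj_grow: "inj (grow \<epsilon>)"
  unfolding inj_def by (intro allI, case_tac x; case_tac y) auto

context constructible_pmod
begin

lemma dFA_carrier [simp]: "dFA C S F I \<in> carrier (AC C)"
  by (cases I) (auto simp: dFA.simps)

lemma FA_carrier [simp]: "FA C S F I \<in> carrier (AC C)"
  by (cases I) (auto simp: FA.simps)

lemma FA_IFin:
  assumes "a \<in> S" "b \<in> S" "a < b"
  shows "FA C S F (IFin a b) =
    (dFA C S F (IFin a b) \<otimes>\<^bsub>AC C\<^esub> inv\<^bsub>AC C\<^esub> dFA C S F (IFin (prv S a) b)) \<otimes>\<^bsub>AC C\<^esub>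
    inv\<^bsub>AC C\<^esub> (dFA C S F (IFin a (nxt S b)) \<otimes>\<^bsub>AC C\<^esub> inv\<^bsub>AC C\<^esub> dFA C S F (IFin (prv S a) (nxt S b)))"
  using assms by (simp add: FA.simps AC.m_ac AC.inv_mult)

lemma FA_IInf:
  "a \<in> S \<Longrightarrow> FA C S F (IInf a) = dFA C S F (IInf a) \<otimes>\<^bsub>AC C\<^esub> inv\<^bsub>AC C\<^esub> dFA C S F (IInf (prv S a))"
  by (simp add: FA.simps)

lemma FA_IFin_support: "FA C S F (IFin a b) \<noteq> \<one>\<^bsub>AC C\<^esub> \<Longrightarrow> a \<in> S \<and> b \<in> S \<and> a < b"
  by (auto simp: FA.simps split: if_splits)

lemma FA_IInf_support: "FA C S F (IInf a) \<noteq> \<one>\<^bsub>AC C\<^esub> \<Longrightarrow> a \<in> S"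
  by (auto simp: FA.simps split: if_splits)

lemma dFA_IFin_beyond_Max:
  assumes "u \<le> Max S"
  shows "dFA C S F (IFin u (Max S + 1)) = dFA C S F (IInf u)"
proof -
  have "Max S + 1 \<notin> S" using Max_ge[OF finite_S, of "Max S + 1"] by linarith
  moreover have "Max (insert u S) = Max S" using finite_S S_nonempty assms by simp
  ultimately show ?thesis by (simp add: dFA.simps)
qed

lemma crit_free_below_Min:
  assumes "x < Min S" "x' < Min S"
  shows "crit_free S x x'"
  unfolding crit_free_def
proof (intro ballI notI)
  fix s assume "s \<in> S" "min x x' < s \<and> s \<le> max x x'"
  then show False using assms Min_le[OF finite_S \<open>s \<in> S\<close>] by (auto simp: max_def split: if_splits)
qed

lemma crit_free_Max_le:
  assumes "{a\<in>S. a \<le> x} \<noteq> {}"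
  shows "crit_free S (Max {a\<in>S. a \<le> x}) x"
  unfolding crit_free_def
proof (intro ballI notI)
  let ?A = "{a\<in>S. a \<le> x}"
  have fin: "finite ?A" using finite_S by simp
  fix s assume "s \<in> S" "min (Max ?A) x < s \<and> s \<le> max (Max ?A) x"
  moreover have "Max ?A \<le> x" using Max_in[OF fin assms] by simp
  ultimately have "s \<in> ?A" "Max ?A < s" by auto
  then show False using Max_ge[OF fin] by fastforce
qed

lemma telescope_prv_eval:
  assumes h: "\<And>w. h w \<in> carrier (AC C)" and h_const: "\<And>w. w \<le> x \<Longrightarrow> crit_free S w x \<Longrightarrow> h w = h x"
  shows "(if {a\<in>S. a \<le> x} = {} then \<one>\<^bsub>AC C\<^esub>
          else h (Max {a\<in>S. a \<le> x}) \<otimes>\<^bsub>AC C\<^esub> inv\<^bsub>AC C\<^esub> h (Min S - 1))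
    = h x \<otimes>\<^bsub>AC C\<^esub> inv\<^bsub>AC C\<^esub> h (min x (Min S - 1))"
proof (cases "{a\<in>S. a \<le> x} = {}")
  case True
  then have "x < Min S" using Min_in[OF finite_S S_nonempty] by force
  then have "h (min x (Min S - 1)) = h x"
    by (intro h_const) (auto intro: crit_free_below_Min)
  then show ?thesis using True h by simp
next
  case False
  have fin: "finite {a\<in>S. a \<le> x}" using finite_S by simp
  have "Max {a\<in>S. a \<le> x} \<le> x" using Max_in[OF fin False] by simp
  then have "h (Max {a\<in>S. a \<le> x}) = h x" using h_const crit_free_Max_le[OF False] by blast
  moreover have "Min S \<le> x" using Max_in[OF fin False] Min_le[OF finite_S] by force
  ultimately show ?thesis unfolding if_not_P[OF False] by simp
qed

text \<open>The intervals containing \<open>[x, y)\<close> that may carry mass are partitioned into the rows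
  of the \<open>a \<in> S\<close> below \<open>x\<close>.\<close>

definition row :: "real \<Rightarrow> real \<Rightarrow> intv set" where
  "row y a = (\<lambda>b. IFin a b) ` {b\<in>S. y \<le> b} \<union> {IInf a}"

definition row_dFA :: "real \<Rightarrow> real \<Rightarrow> ('o \<times> 'o) set" where
  "row_dFA y a = (if {b\<in>S. y \<le> b} = {} then dFA C S F (IInf a)
                  else dFA C S F (IFin a (Min {b\<in>S. y \<le> b})))"

lemma row_dFA_carrier [simp]: "row_dFA y a \<in> carrier (AC C)"
  unfolding row_dFA_def by simp

lemma finprod_FA_row:
  assumes "a \<in> S" "a < y"
  shows "finprod (AC C) (FA C S F) (row y a) = row_dFA y a \<otimes>\<^bsub>AC C\<^esub> inv\<^bsub>AC C\<^esub> row_dFA y (prv S a)"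
proof -
  let ?B = "{b\<in>S. y \<le> b}"
  define h where "h b = dFA C S F (IFin a b) \<otimes>\<^bsub>AC C\<^esub> inv\<^bsub>AC C\<^esub> dFA C S F (IFin (prv S a) b)" for b
  have h_carrier: "h b \<in> carrier (AC C)" for b unfolding h_def by simp
  have "IInf a \<notin> (\<lambda>b. IFin a b) ` ?B" by auto
  then have "finprod (AC C) (FA C S F) (row y a) =
     FA C S F (IInf a) \<otimes>\<^bsub>AC C\<^esub> finprod (AC C) (FA C S F) ((\<lambda>b. IFin a b) ` ?B)"
    unfolding row_def using AC.finprod_insert finite_S by (simp add: Pi_def)
  also have "finprod (AC C) (FA C S F) ((\<lambda>b. IFin a b) ` ?B) = finprod (AC C) (\<lambda>b. FA C S F (IFin a b)) ?B"
    by (rule AC.finprod_reindex) (auto simp: inj_on_def)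
  also have "\<dots> = finprod (AC C) (\<lambda>b. h b \<otimes>\<^bsub>AC C\<^esub> inv\<^bsub>AC C\<^esub> h (nxt S b)) ?B"
    by (rule AC.finprod_cong') (use assms FA_IFin h_carrier in \<open>auto simp: h_def\<close>)
  also have "\<dots> = (if ?B = {} then \<one>\<^bsub>AC C\<^esub> else h (Min ?B) \<otimes>\<^bsub>AC C\<^esub> inv\<^bsub>AC C\<^esub> h (Max S + 1))"
    by (rule AC.finprod_telescope_nxt[OF finite_S h_carrier])
  also have "h (Max S + 1) = FA C S F (IInf a)"
  proof -
    have "a \<le> Max S" "prv S a \<le> Max S"
      using Max_ge[OF finite_S assms(1)] prv_le[OF finite_S assms(1)] by auto
    then show ?thesis unfolding h_def using dFA_IFin_beyond_Max FA_IInf[OF assms(1)] by simp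
  qed
  finally have row: "finprod (AC C) (FA C S F) (row y a) = FA C S F (IInf a) \<otimes>\<^bsub>AC C\<^esub>
     (if ?B = {} then \<one>\<^bsub>AC C\<^esub> else h (Min ?B) \<otimes>\<^bsub>AC C\<^esub> inv\<^bsub>AC C\<^esub> FA C S F (IInf a))" .
  show ?thesis
  proof (cases "?B = {}")
    case True
    then show ?thesis using row FA_IInf[OF assms(1)] unfolding row_dFA_def if_P[OF True] by simp
  next
    case False
    then show ?thesis
      using row h_carrier unfolding row_dFA_def if_not_P[OF False] h_def
      by (simp add: AC.m_inv_cancel_left)
  qed
qed

lemma finprod_FA_rows:
  assumes "x < y"
  shows "finprod (AC C) (FA C S F) (\<Union>a\<in>{a\<in>S. a \<le> x}. row y a) =
    (if {a\<in>S. a \<le> x} = {} then \<one>\<^bsub>AC C\<^esub>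
     else row_dFA y (Max {a\<in>S. a \<le> x}) \<otimes>\<^bsub>AC C\<^esub> inv\<^bsub>AC C\<^esub> row_dFA y (Min S - 1))"
proof -
  have "finprod (AC C) (FA C S F) (\<Union>a\<in>{a\<in>S. a \<le> x}. row y a) =
     finprod (AC C) (\<lambda>a. finprod (AC C) (FA C S F) (row y a)) {a\<in>S. a \<le> x}"
    by (rule AC.finprod_UN_disjoint) (use finite_S in \<open>auto simp: row_def\<close>)
  also have "\<dots> = finprod (AC C) (\<lambda>a. row_dFA y a \<otimes>\<^bsub>AC C\<^esub> inv\<^bsub>AC C\<^esub> row_dFA y (prv S a)) {a\<in>S. a \<le> x}"
    by (rule AC.finprod_cong') (use finprod_FA_row assms in auto)
  also have "\<dots> = (if {a\<in>S. a \<le> x} = {} then \<one>\<^bsub>AC C\<^esub>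
     else row_dFA y (Max {a\<in>S. a \<le> x}) \<otimes>\<^bsub>AC C\<^esub> inv\<^bsub>AC C\<^esub> row_dFA y (Min S - 1))"
    by (rule AC.finprod_telescope_prv[OF finite_S row_dFA_carrier])
  finally show ?thesis .
qed

lemma row_dFA_eq:
  assumes "w \<le> x" "x < y" "crit_free S w x"
  shows "row_dFA y w = dFA C S F (IFin x y)"
proof -
  obtain u where u: "x \<le> u" "u < y" "\<forall>s\<in>S. \<not> (u < s \<and> s < y)"
    using last_crit_free_point[OF assms(2)] by blast
  have im: "im_cls w u = im_cls x u" using im_cls_eq[of w u x u] assms u by simp
  show ?thesis
  proof (cases "{b\<in>S. y \<le> b} = {}")
    case True
    then have below_u: "\<forall>s\<in>S. s \<le> u" using u by force
    have "dFA C S F (IInf w) = im_cls w u"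
      by (rule dFA_IInf_eq_im_cls[OF _ below_u]) (use assms(1) u(1) in auto)
    then show ?thesis
      unfolding row_dFA_def if_P[OF True] using dFA_IFin_eq_im_cls[OF u] im by simp
  next
    case False
    define b1 where "b1 = Min {b\<in>S. y \<le> b}"
    have fin: "finite {b\<in>S. y \<le> b}" using finite_S by simp
    have b1: "y \<le> b1" "\<And>s. s \<in> S \<Longrightarrow> y \<le> s \<Longrightarrow> b1 \<le> s"
      using Min_in[OF fin False] Min_le[OF fin] unfolding b1_def by auto
    have no_crit: "\<forall>s\<in>S. \<not> (u < s \<and> s < b1)"
    proof (intro ballI notI)
      fix s assume "s \<in> S" "u < s \<and> s < b1"
      then show False using u(3) b1(2)[of s] by (cases "y \<le> s") auto
    qed
    have "dFA C S F (IFin w b1) = im_cls w u"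
      by (rule dFA_IFin_eq_im_cls[OF _ _ no_crit]) (use assms(1) u(1,2) b1(1) in auto)
    then show ?thesis
      unfolding row_dFA_def if_not_P[OF False] b1_def[symmetric]
      using dFA_IFin_eq_im_cls[OF u] im by simp
  qed
qed

lemma up_sum_FA_IFin:
  assumes "x < y"
  shows "up_sum C (FA C S F) (IFin x y) =
    dFA C S F (IFin x y) \<otimes>\<^bsub>AC C\<^esub> inv\<^bsub>AC C\<^esub> dFA C S F (IFin (min x (Min S - 1)) y)"
proof -
  let ?J = "{J. valid_intv J \<and> contains J (IFin x y) \<and> FA C S F J \<noteq> \<one>\<^bsub>AC C\<^esub>}"
  let ?Q = "\<Union>a\<in>{a\<in>S. a \<le> x}. row y a"
  have sub: "?J \<subseteq> ?Q"
  proof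
    fix J assume J: "J \<in> ?J"
    show "J \<in> ?Q"
    proof (cases J)
      case (IFin a b)
      then show ?thesis using J FA_IFin_support[of a b] by (auto simp: row_def)
    next
      case (IInf a)
      then show ?thesis using J FA_IInf_support[of a] by (auto simp: row_def)
    qed
  qed
  have rest: "FA C S F J = \<one>\<^bsub>AC C\<^esub>" if "J \<in> ?Q - ?J" for J
    using that assms by (auto simp: row_def)
  have "finite ?Q" using finite_S by (simp add: row_def)
  then have "up_sum C (FA C S F) (IFin x y) = finprod (AC C) (FA C S F) ?Q"
    unfolding up_sum_def by (rule AC.finprod_mono_neutral_cong_left[OF _ sub rest]) simp_all
  also have "\<dots> = row_dFA y x \<otimes>\<^bsub>AC C\<^esub> inv\<^bsub>AC C\<^esub> row_dFA y (min x (Min S - 1))"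
    unfolding finprod_FA_rows[OF assms]
  proof (rule telescope_prv_eval)
    fix w assume "w \<le> x" "crit_free S w x"
    then show "row_dFA y w = row_dFA y x"
      using row_dFA_eq[of w x y] row_dFA_eq[of x x y] assms by simp
  qed simp
  also have "\<dots> = dFA C S F (IFin x y) \<otimes>\<^bsub>AC C\<^esub> inv\<^bsub>AC C\<^esub> dFA C S F (IFin (min x (Min S - 1)) y)"
    using row_dFA_eq[of x x y] row_dFA_eq[of "min x (Min S - 1)" "min x (Min S - 1)" y] assms by simp
  finally show ?thesis .
qed

lemma up_sum_FA_IInf:
  "up_sum C (FA C S F) (IInf x) =
    dFA C S F (IInf x) \<otimes>\<^bsub>AC C\<^esub> inv\<^bsub>AC C\<^esub> dFA C S F (IInf (min x (Min S - 1)))"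
proof -
  let ?J = "{J. valid_intv J \<and> contains J (IInf x) \<and> FA C S F J \<noteq> \<one>\<^bsub>AC C\<^esub>}"
  let ?A = "{a\<in>S. a \<le> x}"
  have sub: "?J \<subseteq> IInf ` ?A"
  proof
    fix J assume J: "J \<in> ?J"
    then show "J \<in> IInf ` ?A" using FA_IInf_support by (cases J) auto
  qed
  have rest: "FA C S F J = \<one>\<^bsub>AC C\<^esub>" if "J \<in> IInf ` ?A - ?J" for J
    using that by auto
  have "up_sum C (FA C S F) (IInf x) = finprod (AC C) (FA C S F) (IInf ` ?A)"
    unfolding up_sum_def
    by (rule AC.finprod_mono_neutral_cong_left[OF _ sub rest]) (use finite_S in simp_all)
  also have "\<dots> = finprod (AC C) (\<lambda>a. FA C S F (IInf a)) ?A"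
    by (rule AC.finprod_reindex) (auto simp: inj_on_def)
  also have "\<dots> = finprod (AC C) (\<lambda>a. dFA C S F (IInf a) \<otimes>\<^bsub>AC C\<^esub> inv\<^bsub>AC C\<^esub> dFA C S F (IInf (prv S a))) ?A"
    by (rule AC.finprod_cong') (auto simp: FA_IInf)
  also have "\<dots> = dFA C S F (IInf x) \<otimes>\<^bsub>AC C\<^esub> inv\<^bsub>AC C\<^esub> dFA C S F (IInf (min x (Min S - 1)))"
    unfolding AC.finprod_telescope_prv[OF finite_S dFA_carrier]
  proof (rule telescope_prv_eval)
    fix w assume "w \<le> x" "crit_free S w x"
    define u where "u = max x (Max S)"
    have "\<forall>s\<in>S. s \<le> u" unfolding u_def using Max_ge[OF finite_S] by force
    moreover have "w \<le> u" "x \<le> u" using \<open>w \<le> x\<close> unfolding u_def by auto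
    ultimately show "dFA C S F (IInf w) = dFA C S F (IInf x)"
      using dFA_IInf_eq_im_cls im_cls_eq[of w u x u] \<open>crit_free S w x\<close> by simp
  qed simp
  finally show ?thesis .
qed

lemma up_sum_carrier [simp]: "up_sum C (FA C S F) I \<in> carrier (AC C)"
  unfolding up_sum_def by (rule AC.finprod_closed) (simp add: Pi_def)

lemma is_pdgm_FA: "is_pdgm C (FA C S F)"
  unfolding is_pdgm_def
proof (intro conjI allI impI exI[of _ S])
  fix I assume ne: "FA C S F I \<noteq> \<one>\<^bsub>AC C\<^esub>"
  show "case I of IFin q r \<Rightarrow> q \<in> S \<and> r \<in> S | IInf q \<Rightarrow> q \<in> S"
  proof (cases I)
    case (IFin q r)
    then show ?thesis using FA_IFin_support[of q r] ne by simp
  next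
    case (IInf q)
    then show ?thesis using FA_IInf_support[of q] ne by simp
  qed
qed (simp_all add: finite_S)

lemma is_pdgm_nabla: "is_pdgm C (nabla \<epsilon> (FA C S F))"
  unfolding is_pdgm_def
proof (intro conjI allI impI exI[of _ "(\<lambda>s. s + \<epsilon>) ` S \<union> (\<lambda>s. s - \<epsilon>) ` S"])
  let ?T = "(\<lambda>s. s + \<epsilon>) ` S \<union> (\<lambda>s. s - \<epsilon>) ` S"
  fix I assume ne: "nabla \<epsilon> (FA C S F) I \<noteq> \<one>\<^bsub>AC C\<^esub>"
  have shifted: "q \<in> ?T" if "q - \<epsilon> \<in> S \<or> q + \<epsilon> \<in> S" for q
    using that image_eqI[of q "\<lambda>s. s + \<epsilon>" "q - \<epsilon>" S] image_eqI[of q "\<lambda>s. s - \<epsilon>" "q + \<epsilon>" S] by auto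
  show "case I of IFin q r \<Rightarrow> q \<in> ?T \<and> r \<in> ?T | IInf q \<Rightarrow> q \<in> ?T"
  proof (cases I)
    case (IFin q r)
    then show ?thesis using FA_IFin_support[of "q - \<epsilon>" "r + \<epsilon>"] ne shifted by (simp add: nabla_def)
  next
    case (IInf q)
    then show ?thesis using FA_IInf_support[of "q - \<epsilon>"] ne shifted by (simp add: nabla_def)
  qed
qed (simp_all add: finite_S nabla_def)

lemma up_sum_nabla:
  assumes "0 \<le> \<epsilon>" and gap: "\<forall>s\<in>S. \<forall>t\<in>S. s < t \<longrightarrow> 2 * \<epsilon> < t - s"
  shows "up_sum C (nabla \<epsilon> (FA C S F)) I = up_sum C (FA C S F) (grow \<epsilon> I)"
proof -
  let ?P = "{J. valid_intv J \<and> contains J I \<and> nabla \<epsilon> (FA C S F) J \<noteq> \<one>\<^bsub>AC C\<^esub>}"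
  let ?Q = "{K. valid_intv K \<and> contains K (grow \<epsilon> I) \<and> FA C S F K \<noteq> \<one>\<^bsub>AC C\<^esub>}"
  have valid_grow: "valid_intv (grow \<epsilon> J)" if "valid_intv J" for J
    using that assms(1) by (cases J) auto
  have "?Q = grow \<epsilon> ` ?P"
  proof
    show "grow \<epsilon> ` ?P \<subseteq> ?Q" using valid_grow by (auto simp: nabla_def)
    show "?Q \<subseteq> grow \<epsilon> ` ?P"
    proof
      fix K assume K: "K \<in> ?Q"
      obtain J where "K = grow \<epsilon> J" "valid_intv J"
      proof (cases K)
        case (IFin a b)
        then have "2 * \<epsilon> < b - a" using FA_IFin_support K gap by auto
        then show ?thesis using that[of "IFin (a + \<epsilon>) (b - \<epsilon>)"] IFin by simp
      next
        case (IInf a)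
        then show ?thesis using that[of "IInf (a + \<epsilon>)"] by simp
      qed
      then show "K \<in> grow \<epsilon> ` ?P" using K by (auto simp: nabla_def)
    qed
  qed
  then have "finprod (AC C) (FA C S F) ?Q = finprod (AC C) (\<lambda>J. FA C S F (grow \<epsilon> J)) ?P"
    using AC.finprod_reindex[of "FA C S F" "grow \<epsilon>" ?P] inj_grow by (simp add: Pi_def inj_on_def inj_def)
  then show ?thesis unfolding up_sum_def nabla_def by (simp add: comp_def)
qed

lemma dFA_IFin_below_Min:
  assumes "x < Min S" "x' < Min S" "x < y" "x' < y"
  shows "dFA C S F (IFin x y) = dFA C S F (IFin x' y)"
proof -
  obtain u where u: "max x x' \<le> u" "u < y" "\<forall>s\<in>S. \<not> (u < s \<and> s < y)"
    using last_crit_free_point[of "max x x'" y] assms by auto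
  then show ?thesis
    using dFA_IFin_eq_im_cls[of x u y] dFA_IFin_eq_im_cls[of x' u y]
      im_cls_eq[of x u x' u] crit_free_below_Min[OF assms(1,2)] by simp
qed

lemma dFA_IInf_below_Min:
  assumes "x < Min S" "x' < Min S"
  shows "dFA C S F (IInf x) = dFA C S F (IInf x')"
proof -
  define u where "u = max (max x x') (Max S)"
  have "\<forall>s\<in>S. s \<le> u" unfolding u_def using Max_ge[OF finite_S] by (simp add: le_max_iff_disj)
  moreover have "x \<le> u" "x' \<le> u" unfolding u_def by auto
  ultimately have "dFA C S F (IInf x) = im_cls x u" "dFA C S F (IInf x') = im_cls x' u"
    using dFA_IInf_eq_im_cls by blast+
  then show ?thesis
    using im_cls_eq[of x u x' u] crit_free_below_Min[OF assms] \<open>x \<le> u\<close> \<open>x' \<le> u\<close> by simp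
qed

end

section \<open>Transfer along interleavings\<close>

lemma finite_gaps_around:
  fixes T :: "real set"
  assumes "finite T" "b > 0"
  obtains t where "0 < t" "t \<le> b" "\<forall>s\<in>T. \<not> (u < s \<and> s \<le> u + t)" "\<forall>s\<in>T. \<not> (v - t \<le> s \<and> s < v)"
proof -
  define D where "D = (\<lambda>s. \<bar>s - u\<bar>) ` (T - {u}) \<union> (\<lambda>s. \<bar>s - v\<bar>) ` (T - {v})"
  define t where "t = (if D = {} then b else min b (Min D / 2))"
  have fin: "finite D" unfolding D_def using assms(1) by simp
  have D_pos: "0 < d" if "d \<in> D" for d using that unfolding D_def by auto
  have small: "t < d" if "d \<in> D" for d
  proof -
    have "Min D \<le> d" "0 < Min D" using Min_le[OF fin that] D_pos Min_in[OF fin] that by auto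
    then show ?thesis using that unfolding t_def by auto
  qed
  have "0 < t" using assms(2) D_pos Min_in[OF fin] unfolding t_def by auto
  moreover have "t \<le> b" unfolding t_def by simp
  moreover have "\<forall>s\<in>T. \<not> (u < s \<and> s \<le> u + t)"
  proof (intro ballI notI)
    fix s assume s: "s \<in> T" "u < s \<and> s \<le> u + t"
    then have "\<bar>s - u\<bar> \<in> D" unfolding D_def by (intro UnI1 image_eqI[where x = s]) auto
    then show False using small s(2) by fastforce
  qed
  moreover have "\<forall>s\<in>T. \<not> (v - t \<le> s \<and> s < v)"
  proof (intro ballI notI)
    fix s assume s: "s \<in> T" "v - t \<le> s \<and> s < v"
    then have "\<bar>s - v\<bar> \<in> D" unfolding D_def by (intro UnI2 image_eqI[where x = s]) auto
    then show False using small s(2) by fastforce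
  qed
  ultimately show ?thesis using that by blast
qed

lemma exists_gap_bound:
  fixes S :: "real set"
  assumes "finite S" "\<forall>s\<in>S. \<forall>t\<in>S. s < t \<longrightarrow> \<epsilon> < (t - s) / 4"
  obtains c where "4 * \<epsilon> < c" "\<forall>s\<in>S. \<forall>t\<in>S. s < t \<longrightarrow> c < t - s"
proof -
  let ?P = "{(s, t). s \<in> S \<and> t \<in> S \<and> s < t}"
  define D where "D = (\<lambda>(s, t). t - s) ` ?P"
  have "?P \<subseteq> S \<times> S" by auto
  then have "finite ?P" by (rule finite_subset) (simp add: assms(1))
  then have fin: "finite D" unfolding D_def by simp
  have gap_in_D: "t - s \<in> D" if "s \<in> S" "t \<in> S" "s < t" for s t
    unfolding D_def using that by (intro image_eqI[of _ _ "(s, t)"]) simp_all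
  have D: "4 * \<epsilon> < d" if d: "d \<in> D" for d
  proof -
    obtain p where "p \<in> ?P" "d = (\<lambda>(s, t). t - s) p" using d unfolding D_def by (rule imageE)
    then obtain s t where "s \<in> S" "t \<in> S" "s < t" "d = t - s" by (cases p) auto
    then have "\<epsilon> < d / 4" using assms(2) by blast
    then show ?thesis by simp
  qed
  define c where "c = (if D = {} then 4 * \<epsilon> + 1 else (Min D + 4 * \<epsilon>) / 2)"
  show ?thesis
  proof
    show "4 * \<epsilon> < c"
      using D[OF Min_in[OF fin]] unfolding c_def by auto
    show "\<forall>s\<in>S. \<forall>t\<in>S. s < t \<longrightarrow> c < t - s"
    proof (intro ballI impI)
      fix s t assume "s \<in> S" "t \<in> S" "s < t"
      then have d: "t - s \<in> D" by (rule gap_in_D)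
      then have "D \<noteq> {}" by auto
      then have "Min D \<le> t - s" "4 * \<epsilon> < Min D" using Min_le[OF fin d] D[OF Min_in[OF fin]] by auto
      then show "c < t - s" unfolding c_def using \<open>D \<noteq> {}\<close> by simp
    qed
  qed
qed

definition almost_interleaved ::
  "('o,'m) smcat \<Rightarrow> real \<Rightarrow> (real \<Rightarrow> real \<Rightarrow> 'm) \<Rightarrow> (real \<Rightarrow> real \<Rightarrow> 'm) \<Rightarrow> bool" where
  "almost_interleaved C \<epsilon> F G \<longleftrightarrow> (\<forall>\<delta>>0. \<exists>e. \<epsilon> \<le> e \<and> e < \<epsilon> + \<delta> \<and> interleaved C e F G)"

lemma dI_eq_erealD:
  assumes "dI C F G = ereal \<epsilon>"
  shows "0 \<le> \<epsilon>" "almost_interleaved C \<epsilon> F G"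
proof -
  let ?X = "{ereal e | e. e \<ge> 0 \<and> interleaved C e F G}"
  have inf: "Inf ?X = ereal \<epsilon>" using assms unfolding dI_def .
  have "ereal 0 \<le> Inf ?X" by (rule Inf_greatest) auto
  then show "0 \<le> \<epsilon>" using inf by simp
  show "almost_interleaved C \<epsilon> F G"
    unfolding almost_interleaved_def
  proof (intro allI impI)
    fix \<delta> :: real assume "\<delta> > 0"
    then have "Inf ?X < ereal (\<epsilon> + \<delta>)" using inf by simp
    then obtain x where x: "x \<in> ?X" "x < ereal (\<epsilon> + \<delta>)" using Inf_less_iff by blast
    then obtain e where e: "x = ereal e" "interleaved C e F G" by auto
    have "Inf ?X \<le> x" using x(1) by (rule Inf_lower)
    then have "\<epsilon> \<le> e" using inf e by simp
    then show "\<exists>e. \<epsilon> \<le> e \<and> e < \<epsilon> + \<delta> \<and> interleaved C e F G" using e x by auto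
  qed
qed

locale constructible_pair = F: constructible_pmod C S F + G: constructible_pmod C S' G
  for C :: "('o,'m) smcat" and S F S' G
begin

lemma interleavedE:
  assumes "interleaved C e F G"
  obtains \<phi> \<psi> where
    "\<And>r. cdom C (\<phi> r) = pobj C F r" "\<And>r. ccod C (\<phi> r) = pobj C G (r + e)"
    "\<And>r. cdom C (\<psi> r) = pobj C G r" "\<And>r. ccod C (\<psi> r) = pobj C F (r + e)"
    "\<And>a b. a \<le> b \<Longrightarrow> G (a + e) (b + e) \<cdot> \<phi> a = \<phi> b \<cdot> F a b"
    "\<And>r. \<psi> (r + e) \<cdot> \<phi> r = F r (r + 2 * e)" "\<And>r. \<phi> (r + e) \<cdot> \<psi> r = G r (r + 2 * e)"
proof -
  obtain \<phi> \<psi> where nt: "nat_trans C F (shiftP e G) \<phi>" "nat_trans C G (shiftP e F) \<psi>"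
    and "\<And>r. \<psi> (r + e) \<cdot> \<phi> r = F r (r + 2 * e)" "\<And>r. \<phi> (r + e) \<cdot> \<psi> r = G r (r + 2 * e)"
    using assms unfolding interleaved_def by blast
  moreover have "cdom C (\<phi> r) = pobj C F r" "ccod C (\<phi> r) = pobj C G (r + e)" for r
    using nt(1) unfolding nat_trans_def pobj_def shiftP_def by auto
  moreover have "cdom C (\<psi> r) = pobj C G r" "ccod C (\<psi> r) = pobj C F (r + e)" for r
    using nt(2) unfolding nat_trans_def pobj_def shiftP_def by auto
  moreover have "G (a + e) (b + e) \<cdot> \<phi> a = \<phi> b \<cdot> F a b" if "a \<le> b" for a b
    using nt(1) that unfolding nat_trans_def shiftP_def by auto
  ultimately show ?thesis using that by blast
qed

text \<open>An \<open>e\<close>-interleaving sandwiches \<open>F (p + 2e) (q - 2e)\<close> and \<open>G (p + e) (q - e)\<close> between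
  the transitions \<open>F p (p + 2e)\<close> and \<open>F (q - 2e) q\<close>, which are isomorphisms when no critical
  value lies in between.\<close>

lemma im_cls_interleaved:
  assumes "interleaved C e F G" and "0 \<le> e" "p + 4 * e \<le> q"
    and crit: "crit_free S p (p + 2 * e)" "crit_free S (q - 2 * e) q"
  shows "F.im_cls p q = G.im_cls (p + e) (q - e)"
proof -
  obtain \<phi> \<psi> where \<phi>: "\<And>r. cdom C (\<phi> r) = pobj C F r" "\<And>r. ccod C (\<phi> r) = pobj C G (r + e)"
    and \<psi>: "\<And>r. cdom C (\<psi> r) = pobj C G r" "\<And>r. ccod C (\<psi> r) = pobj C F (r + e)"
    and \<phi>_nat: "\<And>a b. a \<le> b \<Longrightarrow> G (a + e) (b + e) \<cdot> \<phi> a = \<phi> b \<cdot> F a b"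
    and \<psi>\<phi>: "\<And>r. \<psi> (r + e) \<cdot> \<phi> r = F r (r + 2 * e)"
    and \<phi>\<psi>: "\<And>r. \<phi> (r + e) \<cdot> \<psi> r = G r (r + 2 * e)"
    using interleavedE[OF assms(1)] by blast
  have le: "p \<le> p + 2 * e" "p + 2 * e \<le> q - 2 * e" "q - 2 * e \<le> q" "p + e \<le> p + 3 * e"
    "p + 3 * e \<le> q - e" using assms(2,3) by linarith+
  let ?\<alpha> = "F (p + 2 * e) (q - 2 * e)"
  have iso: "is_iso C (F p (p + 2 * e))" "is_iso C (F (q - 2 * e) q)"
    using F.is_iso_transition crit le by auto
  have "\<phi> (q - 2 * e) \<cdot> ?\<alpha> \<cdot> \<psi> (p + e) = (\<phi> (q - 2 * e) \<cdot> ?\<alpha>) \<cdot> \<psi> (p + e)"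
    by (rule F.comp_assoc[symmetric]) (use \<phi> \<psi> le in \<open>simp_all add: algebra_simps\<close>)
  also have "\<phi> (q - 2 * e) \<cdot> ?\<alpha> = G (p + 3 * e) (q - e) \<cdot> \<phi> (p + 2 * e)"
    using \<phi>_nat[OF le(2)] by (simp add: algebra_simps)
  also have "(G (p + 3 * e) (q - e) \<cdot> \<phi> (p + 2 * e)) \<cdot> \<psi> (p + e) =
      G (p + 3 * e) (q - e) \<cdot> \<phi> (p + 2 * e) \<cdot> \<psi> (p + e)"
    by (rule F.comp_assoc) (use \<phi> \<psi> le in \<open>simp_all add: algebra_simps\<close>)
  also have "\<phi> (p + 2 * e) \<cdot> \<psi> (p + e) = G (p + e) (p + 3 * e)"
    using \<phi>\<psi>[of "p + e"] by (simp add: algebra_simps)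
  also have "G (p + 3 * e) (q - e) \<cdot> G (p + e) (p + 3 * e) = G (p + e) (q - e)"
    by (rule G.transition_comp[OF le(4,5)])
  finally have \<beta>: "\<phi> (q - 2 * e) \<cdot> ?\<alpha> \<cdot> \<psi> (p + e) = G (p + e) (q - e)" .
  have "F p q = F (q - 2 * e) q \<cdot> ?\<alpha> \<cdot> F p (p + 2 * e)"
    using le by (simp add: F.transition_comp)
  then have "iso_obj C (im_obj C (F p q)) (im_obj C ?\<alpha>)"
    using F.iso_obj_im_comp_iso[OF iso] le by simp
  also have "iso_obj C \<dots> (im_obj C (\<phi> (q - 2 * e) \<cdot> ?\<alpha> \<cdot> \<psi> (p + e)))"
  proof (rule F.iso_obj_sym, rule F.iso_obj_im_sandwich)
    show "ccod C (\<phi> p) = cdom C (\<psi> (p + e))" by (simp add: \<phi> \<psi>)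
    have "p + e + e = p + 2 * e" by simp
    then show "ccod C (\<psi> (p + e)) = cdom C ?\<alpha>" using le(2) \<psi>(2)[of "p + e"] by (simp add: ac_simps)
    show "ccod C ?\<alpha> = cdom C (\<phi> (q - 2 * e))" using le(2) by (simp add: \<phi>)
    show "ccod C (\<phi> (q - 2 * e)) = cdom C (\<psi> (q - 2 * e + e))" by (simp add: \<phi> \<psi>)
    show "is_iso C (\<psi> (p + e) \<cdot> \<phi> p)" using \<psi>\<phi>[of p] iso(1) by simp
    show "is_iso C (\<psi> (q - 2 * e + e) \<cdot> \<phi> (q - 2 * e))" using \<psi>\<phi>[of "q - 2 * e"] iso(2) by simp
  qed
  finally have "iso_obj C (im_obj C (F p q)) (im_obj C (G (p + e) (q - e)))"
    unfolding \<beta> .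
  then show ?thesis unfolding F.im_cls_def G.im_cls_def by (rule F.cls_eq_if_iso_obj)
qed

lemma dFA_IFin_transfer:
  assumes "0 \<le> \<epsilon>" "almost_interleaved C \<epsilon> F G" "c \<le> y - x" "4 * \<epsilon> < c"
    and gap_x: "\<forall>s\<in>S. \<not> (x < s \<and> s < x + c)" and gap_y: "\<forall>s\<in>S. \<not> (y - c < s \<and> s < y)"
  shows "dFA C S F (IFin x y) = dFA C S' G (IFin (x + \<epsilon>) (y - \<epsilon>))"
proof -
  obtain t where t: "0 < t" "t \<le> (c - 4 * \<epsilon>) / 8"
    "\<forall>s\<in>S'. \<not> (x + \<epsilon> < s \<and> s \<le> x + \<epsilon> + t)" "\<forall>s\<in>S'. \<not> (y - \<epsilon> - t \<le> s \<and> s < y - \<epsilon>)"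
    using finite_gaps_around[OF G.finite_S, of "(c - 4 * \<epsilon>) / 8"] assms(4) by auto
  have t8: "8 * t \<le> c - 4 * \<epsilon>" using t(2) by simp
  obtain e where e: "\<epsilon> \<le> e" "e < \<epsilon> + t" "interleaved C e F G"
    using assms(2) t(1) unfolding almost_interleaved_def by blast
  define q where "q = y - \<epsilon> - t + e"
  have "F.im_cls x q = G.im_cls (x + e) (q - e)"
  proof (rule im_cls_interleaved[OF e(3)])
    show "crit_free S x (x + 2 * e)"
      by (rule crit_free_within[OF gap_x]) (use assms e t t8 q_def in linarith)+
    show "crit_free S (q - 2 * e) q"
      by (rule crit_free_within[OF gap_y]) (use assms e t t8 q_def in linarith)+
  qed (use assms e t t8 q_def in linarith)+
  moreover have "dFA C S F (IFin x y) = F.im_cls x q"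
  proof (rule F.dFA_IFin_eq_im_cls)
    show "\<forall>s\<in>S. \<not> (q < s \<and> s < y)" using gap_y assms e t t8 unfolding q_def by force
  qed (use assms e t t8 q_def in linarith)+
  moreover have "dFA C S' G (IFin (x + \<epsilon>) (y - \<epsilon>)) = G.im_cls (x + \<epsilon>) (q - e)"
  proof (rule G.dFA_IFin_eq_im_cls)
    show "\<forall>s\<in>S'. \<not> (q - e < s \<and> s < y - \<epsilon>)" using t(4) unfolding q_def by force
  qed (use assms e t t8 q_def in linarith)+
  moreover have "G.im_cls (x + \<epsilon>) (q - e) = G.im_cls (x + e) (q - e)"
  proof (rule G.im_cls_eq)
    have "\<forall>s\<in>S'. \<not> (x + \<epsilon> < s \<and> s < x + \<epsilon> + t)" using t(3) by force
    then show "crit_free S' (x + \<epsilon>) (x + e)"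
      by (rule crit_free_within) (use e in linarith)+
    show "crit_free S' (q - e) (q - e)" by simp
  qed (use assms e t t8 q_def in linarith)+
  ultimately show ?thesis by simp
qed

lemma dFA_IInf_transfer:
  assumes "0 \<le> \<epsilon>" "almost_interleaved C \<epsilon> F G" "4 * \<epsilon> < c"
    and gap_x: "\<forall>s\<in>S. \<not> (x < s \<and> s < x + c)"
  shows "dFA C S F (IInf x) = dFA C S' G (IInf (x + \<epsilon>))"
proof -
  have "0 < (c - 4 * \<epsilon>) / 8" using assms(3) by simp
  then obtain t where t: "0 < t" "t \<le> (c - 4 * \<epsilon>) / 8" "\<forall>s\<in>S'. \<not> (x + \<epsilon> < s \<and> s \<le> x + \<epsilon> + t)"
    using finite_gaps_around[OF G.finite_S, of _ "x + \<epsilon>" 0] by blast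
  have t8: "8 * t \<le> c - 4 * \<epsilon>" using t(2) by simp
  obtain e where e: "\<epsilon> \<le> e" "e < \<epsilon> + t" "interleaved C e F G"
    using assms(2) t(1) unfolding almost_interleaved_def by blast
  define q where "q = max (x + 4 * e) (max (Max S + 2 * e) (Max S' + e)) + 1"
  have S_below: "\<forall>s\<in>S. s \<le> q - 2 * e" and S'_below: "\<forall>s\<in>S'. s \<le> q - e"
    using Max_ge[OF F.finite_S] Max_ge[OF G.finite_S] unfolding q_def by fastforce+
  have "F.im_cls x q = G.im_cls (x + e) (q - e)"
  proof (rule im_cls_interleaved[OF e(3)])
    show "crit_free S x (x + 2 * e)"
      by (rule crit_free_within[OF gap_x]) (use assms e t t8 q_def in linarith)+
    show "crit_free S (q - 2 * e) q"
      unfolding crit_free_def using S_below assms(1) e(1) by (auto simp: min_def max_def)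
  qed (use assms e in \<open>unfold q_def, auto\<close>)
  moreover have "dFA C S F (IInf x) = F.im_cls x q"
    by (rule F.dFA_IInf_eq_im_cls) (use S_below assms e in \<open>unfold q_def, auto\<close>)
  moreover have "dFA C S' G (IInf (x + \<epsilon>)) = G.im_cls (x + \<epsilon>) (q - e)"
    by (rule G.dFA_IInf_eq_im_cls) (use S'_below assms e in \<open>unfold q_def, auto\<close>)
  moreover have "G.im_cls (x + \<epsilon>) (q - e) = G.im_cls (x + e) (q - e)"
  proof (rule G.im_cls_eq)
    have "\<forall>s\<in>S'. \<not> (x + \<epsilon> < s \<and> s < x + \<epsilon> + t)" using t(3) by force
    then show "crit_free S' (x + \<epsilon>) (x + e)"
      by (rule crit_free_within) (use e in linarith)+
  qed (use assms e in \<open>unfold q_def, auto\<close>)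
  ultimately show ?thesis by simp
qed

text \<open>The second term of the telescoped sum may be evaluated at any point below \<open>Min S\<close>; the
  point \<open>w\<close> lies a full gap below it so that the transfer applies there as well.\<close>

lemma up_sum_IFin_transfer:
  assumes "0 \<le> \<epsilon>" "almost_interleaved C \<epsilon> F G" "4 * \<epsilon> < c"
    and gap: "\<forall>s\<in>S. \<forall>t\<in>S. s < t \<longrightarrow> c < t - s"
    and "a \<in> S" "b \<in> S" "a < b"
  shows "up_sum C (FA C S F) (IFin a b) = up_sum C (FA C S' G) (IFin (a + \<epsilon>) (b - \<epsilon>))"
proof -
  define w where "w = min (Min S - c) (Min S' - \<epsilon> - 1)"
  have Min_le_a: "Min S \<le> a" using Min_le[OF F.finite_S assms(5)] .
  have w: "w + c \<le> Min S" "w + \<epsilon> < Min S'" unfolding w_def by auto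
  have "c < b - a" using gap assms(5-7) by blast
  have gap_a: "\<forall>s\<in>S. \<not> (a < s \<and> s < a + c)" and gap_b: "\<forall>s\<in>S. \<not> (b - c < s \<and> s < b)"
    using gap assms(5,6) by force+
  have gap_w: "\<forall>s\<in>S. \<not> (w < s \<and> s < w + c)" using w Min_le[OF F.finite_S] by force
  have "up_sum C (FA C S F) (IFin a b) =
      dFA C S F (IFin a b) \<otimes>\<^bsub>AC C\<^esub> inv\<^bsub>AC C\<^esub> dFA C S F (IFin (Min S - 1) b)"
    using F.up_sum_FA_IFin[OF assms(7)] Min_le_a by simp
  also have "dFA C S F (IFin a b) = dFA C S' G (IFin (a + \<epsilon>) (b - \<epsilon>))"
    by (rule dFA_IFin_transfer[OF assms(1,2) _ assms(3) gap_a gap_b]) (use \<open>c < b - a\<close> in simp)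
  also have "dFA C S F (IFin (Min S - 1) b) = dFA C S F (IFin w b)"
    by (rule F.dFA_IFin_below_Min) (use w assms(3) Min_le_a assms(1,7) in auto)
  also have "\<dots> = dFA C S' G (IFin (w + \<epsilon>) (b - \<epsilon>))"
    by (rule dFA_IFin_transfer[OF assms(1,2) _ assms(3) gap_w gap_b]) (use w Min_le_a assms(7) in simp)
  also have "\<dots> = dFA C S' G (IFin (min (a + \<epsilon>) (Min S' - 1)) (b - \<epsilon>))"
    by (rule G.dFA_IFin_below_Min) (use w Min_le_a \<open>c < b - a\<close> assms(1,3) in auto)
  also have "dFA C S' G (IFin (a + \<epsilon>) (b - \<epsilon>)) \<otimes>\<^bsub>AC C\<^esub>
      inv\<^bsub>AC C\<^esub> dFA C S' G (IFin (min (a + \<epsilon>) (Min S' - 1)) (b - \<epsilon>)) =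
      up_sum C (FA C S' G) (IFin (a + \<epsilon>) (b - \<epsilon>))"
    by (rule G.up_sum_FA_IFin[symmetric]) (use \<open>c < b - a\<close> assms(1,3) in simp)
  finally show ?thesis .
qed

lemma up_sum_IInf_transfer:
  assumes "0 \<le> \<epsilon>" "almost_interleaved C \<epsilon> F G" "4 * \<epsilon> < c"
    and gap: "\<forall>s\<in>S. \<forall>t\<in>S. s < t \<longrightarrow> c < t - s"
    and "a \<in> S"
  shows "up_sum C (FA C S F) (IInf a) = up_sum C (FA C S' G) (IInf (a + \<epsilon>))"
proof -
  define w where "w = min (Min S - c) (Min S' - \<epsilon> - 1)"
  have Min_le_a: "Min S \<le> a" using Min_le[OF F.finite_S assms(5)] .
  have w: "w + c \<le> Min S" "w + \<epsilon> < Min S'" unfolding w_def by auto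
  have gap_a: "\<forall>s\<in>S. \<not> (a < s \<and> s < a + c)" using gap assms(5) by force
  have gap_w: "\<forall>s\<in>S. \<not> (w < s \<and> s < w + c)" using w Min_le[OF F.finite_S] by force
  have "up_sum C (FA C S F) (IInf a) =
      dFA C S F (IInf a) \<otimes>\<^bsub>AC C\<^esub> inv\<^bsub>AC C\<^esub> dFA C S F (IInf (Min S - 1))"
    using F.up_sum_FA_IInf Min_le_a by simp
  also have "dFA C S F (IInf a) = dFA C S' G (IInf (a + \<epsilon>))"
    by (rule dFA_IInf_transfer[OF assms(1-3) gap_a])
  also have "dFA C S F (IInf (Min S - 1)) = dFA C S F (IInf w)"
    by (rule F.dFA_IInf_below_Min) (use w assms(1,3) in auto)
  also have "\<dots> = dFA C S' G (IInf (w + \<epsilon>))"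
    by (rule dFA_IInf_transfer[OF assms(1-3) gap_w])
  also have "\<dots> = dFA C S' G (IInf (min (a + \<epsilon>) (Min S' - 1)))"
    by (rule G.dFA_IInf_below_Min) (use w in auto)
  also have "dFA C S' G (IInf (a + \<epsilon>)) \<otimes>\<^bsub>AC C\<^esub> inv\<^bsub>AC C\<^esub> dFA C S' G (IInf (min (a + \<epsilon>) (Min S' - 1))) =
      up_sum C (FA C S' G) (IInf (a + \<epsilon>))"
    by (rule G.up_sum_FA_IInf[symmetric])
  finally show ?thesis .
qed

lemma up_sum_nabla_FA_eq:
  assumes "0 \<le> \<epsilon>" "almost_interleaved C \<epsilon> F G" "4 * \<epsilon> < c"
    and gap: "\<forall>s\<in>S. \<forall>t\<in>S. s < t \<longrightarrow> c < t - s"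
    and "nabla \<epsilon> (FA C S F) I \<noteq> \<one>\<^bsub>AC C\<^esub>"
  shows "up_sum C (nabla \<epsilon> (FA C S F)) I = up_sum C (FA C S' G) I"
proof -
  have "\<forall>s\<in>S. \<forall>t\<in>S. s < t \<longrightarrow> 2 * \<epsilon> < t - s" using gap assms(1,3) by force
  then have "up_sum C (nabla \<epsilon> (FA C S F)) I = up_sum C (FA C S F) (grow \<epsilon> I)"
    by (rule F.up_sum_nabla[OF assms(1)])
  also have "\<dots> = up_sum C (FA C S' G) I"
  proof (cases I)
    case (IFin q r)
    then have "q - \<epsilon> \<in> S" "r + \<epsilon> \<in> S" "q - \<epsilon> < r + \<epsilon>"
      using F.FA_IFin_support assms(5) unfolding nabla_def by auto
    then show ?thesis using up_sum_IFin_transfer[OF assms(1-4)] IFin by fastforce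
  next
    case (IInf q)
    then have "q - \<epsilon> \<in> S" using F.FA_IInf_support assms(5) unfolding nabla_def by auto
    then show ?thesis using up_sum_IInf_transfer[OF assms(1-4)] IInf by fastforce
  qed
  finally show ?thesis .
qed

end

theorem theorem8p1:
  fixes C :: "('o, 'm) smcat"
    and Uo :: "'o \<Rightarrow> 'x set" and Um :: "'m \<Rightarrow> 'x \<Rightarrow> 'x"
    and F G :: "real \<Rightarrow> real \<Rightarrow> 'm" and S :: "real set" and \<epsilon> :: real
  assumes "is_smc C" and "has_images C" and "concrete_images C Uo Um"
    and "constructible C S F"
    and "in_Pmod C G"
    and "dI C F G = ereal \<epsilon>"
    and "\<forall>s\<in>S. \<forall>t\<in>S. s < t \<longrightarrow> \<epsilon> < (t - s) / 4"
  shows "\<forall>S'. constructible C S' G \<longrightarrow>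
           is_pdgm C (nabla \<epsilon> (FA C S F)) \<and> is_pdgm C (FA C S' G) \<and>
           pdgm_hom C (nabla \<epsilon> (FA C S F)) (FA C S' G)"
proof (intro allI impI conjI)
  fix S' assume "constructible C S' G"
  then interpret constructible_pair C S F S' G
    using assms by unfold_locales (simp_all add: smc_images_def)
  obtain c where c: "4 * \<epsilon> < c" "\<forall>s\<in>S. \<forall>t\<in>S. s < t \<longrightarrow> c < t - s"
    using exists_gap_bound[OF F.finite_S assms(7)] .
  show "is_pdgm C (nabla \<epsilon> (FA C S F))" by (rule F.is_pdgm_nabla)
  show "is_pdgm C (FA C S' G)" by (rule G.is_pdgm_FA)
  show "pdgm_hom C (nabla \<epsilon> (FA C S F)) (FA C S' G)"
    unfolding pdgm_hom_def
    using up_sum_nabla_FA_eq[OF dI_eq_erealD[OF assms(6)] c] F.Ale_refl G.up_sum_carrier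
    by simp
qed

end
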